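(* Let $\mathcal{H}\in\mathbb{R}_D^{[n_1,\ldots,n_m]}$. If $\operatorname{hrank}(\mathcal{H})\le3$, then $\operatorname{hrank}(\mathcal{H})=\operatorname{hrank}_{\mathbb{R}}(\mathcal{H})$. Furthermore, if $\operatorname{hrank}_{\mathbb{R}}(\mathcal{H})\le 4$, then $\operatorname{hrank}(\mathcal{H})=\operatorname{hrank}_{\mathbb{R}}(\mathcal{H})$.
   Context: For $v_i$ vectors, $[v_1,\ldots,v_m]_{\otimes h}:=v_1\otimes\cdots\otimes v_m\otimes\overline{v_1}\otimes\cdots\otimes\overline{v_m}$. A Hermitian tensor is $\mathcal{H}\in\mathbb{C}^{n_1\times\cdots\times n_m\times n_1\times\cdots\times n_m}$ with $\mathcal{H}_{i_1\ldots i_m j_1\ldots j_m}=\overline{\mathcal{H}_{j_1\ldots j_m i_1\ldots i_m}}$; $\operatorname{hrank}(\mathcal{H})$ is the smallest $r$ with $\mathcal{H}=\sum_{i=1}^r\lambda_i[u_i^1,\ldots,u_i^m]_{\otimes h}$, $\lambda_i\in\mathbb{R}$, $u_i^j\in\mathbb{C}^{n_j}$. $\mathbb{R}_D^{[n_1,\ldots,n_m]}$ is the set of real Hermitian tensors admitting such a decomposition with all $u_i^j$ real ($u_i^j\in\mathbb{R}^{n_j}$); for these, $\operatorname{hrank}_{\mathbb{R}}(\mathcal{H})$ is the smallest length of such a real decomposition. *)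

theory Defs
  imports Complex_Main
begin

text \<open>A tensor in
C^{n_1 x ... x n_m x n_1 x ... x n_m} is a function H taking two multi-indices
(i_1..i_m) and (j_1..j_m), each a list; only valid multi-indices matter.
Index positions are 0-based.\<close>

definition valid_idx :: "nat list \<Rightarrow> nat list \<Rightarrow> bool" where
  "valid_idx ns is \<longleftrightarrow> length is = length ns \<and> (\<forall>k<length ns. is ! k < ns ! k)"

definition hermitian_tensor :: "nat list \<Rightarrow> (nat list \<Rightarrow> nat list \<Rightarrow> complex) \<Rightarrow> bool" where
  "hermitian_tensor ns H \<longleftrightarrow>
     (\<forall>is js. valid_idx ns is \<and> valid_idx ns js \<longrightarrow> H is js = cnj (H js is))"

text \<open>Entry (is,js) of [u^1,...,u^m]_{(x)h} = u^1 (x)...(x) u^m (x) conj u^1 (x) ... (x) conj u^m.\<close>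
definition hrank1 :: "nat list \<Rightarrow> (nat \<Rightarrow> nat \<Rightarrow> complex) \<Rightarrow> nat list \<Rightarrow> nat list \<Rightarrow> complex" where
  "hrank1 ns v is js = (\<Prod>k<length ns. v k (is ! k)) * (\<Prod>k<length ns. cnj (v k (js ! k)))"

text \<open>H = sum_{i<r} lam_i [u_i^1,...,u_i^m]_{(x)h}; u i k is the vector u_i^{k+1}.\<close>
definition hdecomp :: "nat list \<Rightarrow> (nat list \<Rightarrow> nat list \<Rightarrow> complex) \<Rightarrow> nat
     \<Rightarrow> (nat \<Rightarrow> real) \<Rightarrow> (nat \<Rightarrow> nat \<Rightarrow> nat \<Rightarrow> complex) \<Rightarrow> bool" where
  "hdecomp ns H r lam u \<longleftrightarrow>
     (\<forall>is js. valid_idx ns is \<and> valid_idx ns js \<longrightarrow>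
        H is js = (\<Sum>i<r. complex_of_real (lam i) * hrank1 ns (u i) is js))"

definition real_vectors :: "(nat \<Rightarrow> nat \<Rightarrow> nat \<Rightarrow> complex) \<Rightarrow> bool" where
  "real_vectors u \<longleftrightarrow> (\<forall>i k j. u i k j \<in> \<real>)"

definition hrank :: "nat list \<Rightarrow> (nat list \<Rightarrow> nat list \<Rightarrow> complex) \<Rightarrow> nat" where
  "hrank ns H = (LEAST r. \<exists>lam u. hdecomp ns H r lam u)"

definition hrank_real :: "nat list \<Rightarrow> (nat list \<Rightarrow> nat list \<Rightarrow> complex) \<Rightarrow> nat" where
  "hrank_real ns H = (LEAST r. \<exists>lam u. real_vectors u \<and> hdecomp ns H r lam u)"

definition RD :: "nat list \<Rightarrow> (nat list \<Rightarrow> nat list \<Rightarrow> complex) set" where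
  "RD ns = {H. hermitian_tensor ns H
              \<and> (\<forall>is js. valid_idx ns is \<and> valid_idx ns js \<longrightarrow> H is js \<in> \<real>)
              \<and> (\<exists>r lam u. real_vectors u \<and> hdecomp ns H r lam u)}"

end

theory Submission
  imports Defs
begin

text \<open>A tensor with a real decomposition is invariant under exchanging \<open>i\<^sub>k\<close> and \<open>j\<^sub>k\<close> in
  any single mode \<open>k\<close>. Conversely, let \<open>H\<close> be swap invariant with a complex decomposition of
  length \<open>r \<le> 3\<close>. Terms that vanish or are real up to phase in every mode can be split off.
  Subtracting the swap of \<open>H\<close> in a mode \<open>k\<close> where some term is not real up to phase gives a
  linear relation among at most three product tensors, which forces the terms to share their
  vectors up to scalars in every mode but \<open>k\<close> (a second exceptional mode is handled by the
  same argument applied to its rank-one factors). The shared vectors are then real up to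
  phase and the mode-\<open>k\<close> factor is a real symmetric matrix of rank at most \<open>r\<close>, which
  Wedderburn rank reduction splits into \<open>r\<close> real rank-one terms. When exactly one term is
  real in mode \<open>k\<close>, a swap in another mode shows that either the other two terms merge into
  one or both parts are swap invariant on their own, so the shorter cases apply.\<close>

section \<open>Product tensors and linear relations between them\<close>

text \<open>\<open>ptensor ns F\<close> is the Kronecker product of the matrices \<open>F l\<close>, \<open>l < length ns\<close>, as a
  tensor with entries indexed by \<open>(is, js)\<close>; a Hermitian rank-one term \<open>[u\<^sup>1, ..., u\<^sup>m]\<close> is the
  case \<open>F l = u\<^sup>l (u\<^sup>l)\<^sup>*\<close>.\<close>

definition ptensor :: "nat list \<Rightarrow> (nat \<Rightarrow> nat \<Rightarrow> nat \<Rightarrow> complex) \<Rightarrow> nat list \<Rightarrow> nat list \<Rightarrow> complex" where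
  "ptensor ns F is js = (\<Prod>l<length ns. F l (is!l) (js!l))"

definition zero_mat :: "nat \<Rightarrow> (nat \<Rightarrow> nat \<Rightarrow> complex) \<Rightarrow> bool" where
  "zero_mat n M \<longleftrightarrow> (\<forall>p<n. \<forall>q<n. M p q = 0)"

definition mat_multiple :: "nat \<Rightarrow> (nat \<Rightarrow> nat \<Rightarrow> complex) \<Rightarrow> (nat \<Rightarrow> nat \<Rightarrow> complex) \<Rightarrow> bool" where
  "mat_multiple n G F \<longleftrightarrow> (\<exists>\<gamma>. \<forall>p<n. \<forall>q<n. G p q = \<gamma> * F p q)"

lemma valid_idx_length: "valid_idx ns is \<Longrightarrow> length is = length ns"
  unfolding valid_idx_def by auto

lemma valid_idx_update: "valid_idx ns is \<Longrightarrow> k < length ns \<Longrightarrow> p < ns!k \<Longrightarrow> valid_idx ns (is[k:=p])"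
  unfolding valid_idx_def by (auto simp: nth_list_update)

lemma valid_idx_swap:
  assumes "k < length ns" "valid_idx ns is" "valid_idx ns js"
  shows "valid_idx ns (is[k:=js!k])" "valid_idx ns (js[k:=is!k])"
  using assms by (auto simp: valid_idx_def nth_list_update)

lemma ptensor_split:
  "k < length ns \<Longrightarrow>
   ptensor ns F is js = F k (is!k) (js!k) * (\<Prod>l\<in>{..<length ns}-{k}. F l (is!l) (js!l))"
  unfolding ptensor_def by (simp add: prod.remove)

lemma ptensor_fun_upd:
  "k < length ns \<Longrightarrow>
   ptensor ns (F(k:=G)) is js = G (is!k) (js!k) * (\<Prod>l\<in>{..<length ns}-{k}. F l (is!l) (js!l))"
  by (subst ptensor_split[of k]) auto

lemma ptensor_list_update:
  assumes "k < length ns" "length is = length ns" "length js = length ns"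
  shows "ptensor ns F (is[k:=p]) (js[k:=q]) = F k p q * (\<Prod>l\<in>{..<length ns}-{k}. F l (is!l) (js!l))"
  using assms by (subst ptensor_split[of k]) (auto intro!: prod.cong)

lemma ptensor_cong:
  assumes "\<forall>l<length ns. \<forall>p<ns!l. \<forall>q<ns!l. F l p q = G l p q" "valid_idx ns is" "valid_idx ns js"
  shows "ptensor ns F is js = ptensor ns G is js"
  using assms unfolding ptensor_def valid_idx_def by (auto intro!: prod.cong)

lemma ptensor_scale:
  assumes "\<And>l p q. l < length ns \<Longrightarrow> p < ns!l \<Longrightarrow> q < ns!l \<Longrightarrow> F l p q = \<gamma> l * G l p q"
    and "valid_idx ns is" "valid_idx ns js"
  shows "ptensor ns F is js = (\<Prod>l<length ns. \<gamma> l) * ptensor ns G is js"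
  using assms unfolding ptensor_def valid_idx_def
  by (auto simp add: prod.distrib[symmetric] intro!: prod.cong)

lemma ptensor_linear:
  assumes "k < length ns"
  shows "ptensor ns (F(k := (\<lambda>p q. \<Sum>i\<in>I. c i * G i p q))) is js
       = (\<Sum>i\<in>I. c i * ptensor ns (F(k := G i)) is js)"
  using assms by (simp add: ptensor_fun_upd sum_distrib_right mult.assoc)

lemma ptensor_zero_factor:
  assumes "l < length ns" "zero_mat (ns!l) (F l)" "valid_idx ns is" "valid_idx ns js"
  shows "ptensor ns F is js = 0"
  using assms by (subst ptensor_split[of l]) (auto simp: valid_idx_def zero_mat_def)

lemma ptensor_nonzero_entry:
  assumes "\<forall>l<length ns. \<not> zero_mat (ns!l) (F l)"
  obtains "is" js where "valid_idx ns is" "valid_idx ns js" "\<forall>l<length ns. F l (is!l) (js!l) \<noteq> 0"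
proof -
  have "\<forall>l. \<exists>pq. l < length ns \<longrightarrow> fst pq < ns!l \<and> snd pq < ns!l \<and> F l (fst pq) (snd pq) \<noteq> 0"
    using assms unfolding zero_mat_def by force
  then obtain P where P: "\<And>l. l < length ns \<Longrightarrow>
      fst (P l) < ns!l \<and> snd (P l) < ns!l \<and> F l (fst (P l)) (snd (P l)) \<noteq> 0"
    by metis
  define is0 where "is0 = map (\<lambda>l. fst (P l)) [0..<length ns]"
  define js0 where "js0 = map (\<lambda>l. snd (P l)) [0..<length ns]"
  have "valid_idx ns is0" "valid_idx ns js0" unfolding is0_def js0_def valid_idx_def using P by auto
  moreover have "\<forall>l<length ns. F l (is0!l) (js0!l) \<noteq> 0" unfolding is0_def js0_def using P by auto
  ultimately show ?thesis using that by blast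
qed

lemma ptensor_nonzero:
  assumes "\<forall>l<length ns. F l (is!l) (js!l) \<noteq> 0"
  shows "ptensor ns F is js \<noteq> 0"
  using assms unfolding ptensor_def by (simp add: prod_zero_iff)

lemma ptensor_eq_0_imp_zero_factor:
  assumes "\<forall>is js. valid_idx ns is \<and> valid_idx ns js \<longrightarrow> ptensor ns F is js = 0"
  shows "\<exists>l<length ns. zero_mat (ns!l) (F l)"
  using assms ptensor_nonzero ptensor_nonzero_entry by metis

lemma mat_multiple_refl: "mat_multiple n F F"
  unfolding mat_multiple_def by (intro exI[of _ 1]) simp

lemma mat_multiple_cancel:
  assumes "\<not> zero_mat n G" "mat_multiple n G F1" "mat_multiple n G F0"
  shows "mat_multiple n F1 F0"
proof -
  obtain a where a: "\<forall>p<n. \<forall>q<n. G p q = a * F1 p q" using assms(2) unfolding mat_multiple_def by blast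
  obtain b where b: "\<forall>p<n. \<forall>q<n. G p q = b * F0 p q" using assms(3) unfolding mat_multiple_def by blast
  have "a \<noteq> 0" using assms(1) a unfolding zero_mat_def by auto
  then show ?thesis unfolding mat_multiple_def using a b
    by (intro exI[of _ "b / a"]) (auto simp: field_simps)
qed

lemma mat_multiple_sym: "\<not> zero_mat n G \<Longrightarrow> mat_multiple n G F \<Longrightarrow> mat_multiple n F G"
  using mat_multiple_cancel mat_multiple_refl by blast

text \<open>Varying the index of one mode at a time shows that each pair of factors is proportional.\<close>

lemma ptensor_relation2:
  assumes rel: "\<forall>is js. valid_idx ns is \<and> valid_idx ns js \<longrightarrow>
                  c * ptensor ns F is js + d * ptensor ns G is js = 0"
    and c: "c \<noteq> 0" and F: "\<forall>l<length ns. \<not> zero_mat (ns!l) (F l)"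
  shows "d \<noteq> 0" and "\<forall>l<length ns. mat_multiple (ns!l) (G l) (F l)"
proof -
  obtain is1 js1 where v1: "valid_idx ns is1" "valid_idx ns js1" and "ptensor ns F is1 js1 \<noteq> 0"
    using ptensor_nonzero_entry[OF F] ptensor_nonzero by metis
  moreover have "c * ptensor ns F is1 js1 + d * ptensor ns G is1 js1 = 0" using rel v1 by blast
  ultimately have dG: "d \<noteq> 0 \<and> ptensor ns G is1 js1 \<noteq> 0" using c by auto
  then show d: "d \<noteq> 0" by blast
  have G: "\<forall>l<length ns. \<not> zero_mat (ns!l) (G l)" using ptensor_zero_factor v1 dG by blast
  obtain is0 js0 where v0: "valid_idx ns is0" "valid_idx ns js0"
    and G0: "\<forall>l<length ns. G l (is0!l) (js0!l) \<noteq> 0"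
    using ptensor_nonzero_entry[OF G] by blast
  show "\<forall>l<length ns. mat_multiple (ns!l) (G l) (F l)"
  proof (intro allI impI)
    fix l assume l: "l < length ns"
    define PF where "PF = (\<Prod>l'\<in>{..<length ns}-{l}. F l' (is0!l') (js0!l'))"
    define PG where "PG = (\<Prod>l'\<in>{..<length ns}-{l}. G l' (is0!l') (js0!l'))"
    have PG: "PG \<noteq> 0" unfolding PG_def using G0 by (simp add: prod_zero_iff)
    show "mat_multiple (ns!l) (G l) (F l)" unfolding mat_multiple_def
    proof (intro exI allI impI)
      fix p q assume pq: "p < ns!l" "q < ns!l"
      have "c * ptensor ns F (is0[l:=p]) (js0[l:=q]) + d * ptensor ns G (is0[l:=p]) (js0[l:=q]) = 0"
        using rel valid_idx_update[OF v0(1) l pq(1)] valid_idx_update[OF v0(2) l pq(2)] by blast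
      then have "c * (F l p q * PF) + d * (G l p q * PG) = 0"
        unfolding PF_def PG_def using ptensor_list_update[OF l] v0 by (simp add: valid_idx_length)
      then show "G l p q = (- (c * PF) / (d * PG)) * F l p q"
        using d PG by (simp add: field_simps) (metis add.commute add_eq_0_iff mult.commute mult.left_commute)
    qed
  qed
qed

text \<open>If \<open>F1 l\<close> is not a multiple of \<open>F0 l\<close>, a combination of two copies of the
  relation with entries shifted in mode \<open>l\<close> removes the \<open>F0\<close> term.\<close>

lemma ptensor_relation3_eliminate:
  assumes rel: "\<forall>is js. valid_idx ns is \<and> valid_idx ns js \<longrightarrow>
        c0 * ptensor ns F0 is js + c1 * ptensor ns F1 is js + c2 * ptensor ns F2 is js = 0"
    and c1: "c1 \<noteq> 0" and l: "l < length ns" and F0: "\<not> zero_mat (ns!l) (F0 l)"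
    and np: "\<not> mat_multiple (ns!l) (F1 l) (F0 l)" and F1: "\<forall>l<length ns. \<not> zero_mat (ns!l) (F1 l)"
  shows "\<forall>l'<length ns. l' \<noteq> l \<longrightarrow> mat_multiple (ns!l') (F2 l') (F1 l')"
proof -
  obtain p0 q0 where pq0: "p0 < ns!l" "q0 < ns!l" "F0 l p0 q0 \<noteq> 0"
    using F0 unfolding zero_mat_def by blast
  obtain p q where pq: "p < ns!l" "q < ns!l" "F1 l p q \<noteq> (F1 l p0 q0 / F0 l p0 q0) * F0 l p q"
    using np unfolding mat_multiple_def by blast
  define shift where "shift = (\<lambda>F::nat\<Rightarrow>nat\<Rightarrow>nat\<Rightarrow>complex.
    F(l := (\<lambda>_ _. F0 l p0 q0 * F l p q - F0 l p q * F l p0 q0)))"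
  have shift: "ptensor ns (shift F) is js = F0 l p0 q0 * ptensor ns F (is[l:=p]) (js[l:=q])
                 - F0 l p q * ptensor ns F (is[l:=p0]) (js[l:=q0])"
    if "valid_idx ns is" "valid_idx ns js" for F "is" js
    using that l unfolding shift_def
    by (simp add: ptensor_fun_upd ptensor_list_update valid_idx_length algebra_simps)
  have rel2: "\<forall>is js. valid_idx ns is \<and> valid_idx ns js \<longrightarrow>
        c1 * ptensor ns (shift F1) is js + c2 * ptensor ns (shift F2) is js = 0"
  proof (intro allI impI)
    fix "is" js assume v: "valid_idx ns is \<and> valid_idx ns js"
    have r: "c0 * ptensor ns F0 (is[l:=a]) (js[l:=b]) + c1 * ptensor ns F1 (is[l:=a]) (js[l:=b])
             + c2 * ptensor ns F2 (is[l:=a]) (js[l:=b]) = 0" if "a < ns!l" "b < ns!l" for a b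
      using rel valid_idx_update v l that by blast
    have "c0 * ptensor ns (shift F0) is js + c1 * ptensor ns (shift F1) is js
          + c2 * ptensor ns (shift F2) is js
        = F0 l p0 q0 * (c0 * ptensor ns F0 (is[l:=p]) (js[l:=q]) + c1 * ptensor ns F1 (is[l:=p]) (js[l:=q])
             + c2 * ptensor ns F2 (is[l:=p]) (js[l:=q]))
          - F0 l p q * (c0 * ptensor ns F0 (is[l:=p0]) (js[l:=q0]) + c1 * ptensor ns F1 (is[l:=p0]) (js[l:=q0])
             + c2 * ptensor ns F2 (is[l:=p0]) (js[l:=q0]))"
      using v by (simp add: shift algebra_simps)
    also have "\<dots> = 0" using r pq pq0 by simp
    finally have "c0 * ptensor ns (shift F0) is js + c1 * ptensor ns (shift F1) is js
          + c2 * ptensor ns (shift F2) is js = 0" .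
    moreover have "ptensor ns (shift F0) is js = 0"
      using l v unfolding shift_def by (simp add: ptensor_fun_upd)
    ultimately show "c1 * ptensor ns (shift F1) is js + c2 * ptensor ns (shift F2) is js = 0" by simp
  qed
  have "F0 l p0 q0 * F1 l p q - F0 l p q * F1 l p0 q0 \<noteq> 0"
    using pq(3) pq0(3) by (auto simp: field_simps)
  then have "\<forall>l'<length ns. \<not> zero_mat (ns!l') (shift F1 l')"
    using F1 pq(1) unfolding shift_def zero_mat_def by auto
  with ptensor_relation2(2)[OF rel2 c1] show ?thesis unfolding shift_def by auto
qed

lemma sum_lessThan_2: "(\<Sum>i<2. f i) = f 0 + f 1" for f :: "nat \<Rightarrow> 'a::comm_monoid_add"
  by (simp add: numeral_2_eq_2)

lemma sum_lessThan_3: "(\<Sum>i<3. f i) = f 0 + f 1 + f 2" for f :: "nat \<Rightarrow> 'a::comm_monoid_add"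
  by (simp add: numeral_3_eq_3 numeral_2_eq_2)

lemma less_3_cases: "(i::nat) < 3 \<Longrightarrow> i = 0 \<or> i = 1 \<or> i = 2"
  by auto

lemma ptensor_relation3_multiple:
  assumes rel: "\<forall>is js. valid_idx ns is \<and> valid_idx ns js \<longrightarrow>
        c0 * ptensor ns F0 is js + c1 * ptensor ns F1 is js + c2 * ptensor ns F2 is js = 0"
    and c2: "c2 \<noteq> 0" and F0: "\<forall>l<length ns. \<not> zero_mat (ns!l) (F0 l)"
    and F2: "\<forall>l<length ns. \<not> zero_mat (ns!l) (F2 l)"
    and F10: "\<forall>l<length ns. mat_multiple (ns!l) (F1 l) (F0 l)"
  shows "\<forall>l<length ns. mat_multiple (ns!l) (F2 l) (F0 l)"
proof -
  obtain \<gamma> where \<gamma>: "\<And>l p q. l < length ns \<Longrightarrow> p < ns!l \<Longrightarrow> q < ns!l \<Longrightarrow> F1 l p q = \<gamma> l * F0 l p q"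
    using F10 unfolding mat_multiple_def by metis
  define d where "d = c0 + c1 * (\<Prod>l<length ns. \<gamma> l)"
  have "c0 * ptensor ns F0 is js + c1 * ptensor ns F1 is js = d * ptensor ns F0 is js"
    if "valid_idx ns is" "valid_idx ns js" for "is" js
    using ptensor_scale[of ns F1 \<gamma> F0, OF \<gamma> that] unfolding d_def by (simp add: algebra_simps)
  then have rel': "\<forall>is js. valid_idx ns is \<and> valid_idx ns js \<longrightarrow>
      d * ptensor ns F0 is js + c2 * ptensor ns F2 is js = 0"
    using rel by metis
  then have "\<forall>is js. valid_idx ns is \<and> valid_idx ns js \<longrightarrow>
      c2 * ptensor ns F2 is js + d * ptensor ns F0 is js = 0"
    by (simp add: add.commute)
  then have "d \<noteq> 0" using ptensor_relation2(1) c2 F2 by blast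
  then show ?thesis using ptensor_relation2(2)[OF rel' _ F0] by blast
qed

lemma ptensor_relation3:
  fixes F :: "nat \<Rightarrow> nat \<Rightarrow> nat \<Rightarrow> nat \<Rightarrow> complex"
  assumes rel: "\<forall>is js. valid_idx ns is \<and> valid_idx ns js \<longrightarrow> (\<Sum>i<3. c i * ptensor ns (F i) is js) = 0"
    and c: "\<forall>i<3. c i \<noteq> 0" and F: "\<forall>i<3. \<forall>l<length ns. \<not> zero_mat (ns!l) (F i l)"
  obtains k0 where "\<forall>i<3. \<forall>l<length ns. l \<noteq> k0 \<longrightarrow> mat_multiple (ns!l) (F i l) (F 0 l)"
proof -
  have rel3: "\<forall>is js. valid_idx ns is \<and> valid_idx ns js \<longrightarrow>
      c 0 * ptensor ns (F 0) is js + c 1 * ptensor ns (F 1) is js + c 2 * ptensor ns (F 2) is js = 0"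
    using rel by (simp add: sum_lessThan_3)
  have F0: "\<forall>l<length ns. \<not> zero_mat (ns!l) (F 0 l)" and F1: "\<forall>l<length ns. \<not> zero_mat (ns!l) (F 1 l)"
    and F2: "\<forall>l<length ns. \<not> zero_mat (ns!l) (F 2 l)" using F by auto
  have c012: "c 0 \<noteq> 0" "c 1 \<noteq> 0" "c 2 \<noteq> 0" using c by auto
  have "\<exists>k0. \<forall>l<length ns. l \<noteq> k0 \<longrightarrow>
      mat_multiple (ns!l) (F 1 l) (F 0 l) \<and> mat_multiple (ns!l) (F 2 l) (F 0 l)"
  proof (cases "\<forall>l<length ns. mat_multiple (ns!l) (F 1 l) (F 0 l)")
    case True
    then show ?thesis using ptensor_relation3_multiple[OF rel3 c012(3) F0 F2] by blast
  next
    case False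
    then obtain l where l: "l < length ns" "\<not> mat_multiple (ns!l) (F 1 l) (F 0 l)" by blast
    have F21: "\<forall>l'<length ns. l' \<noteq> l \<longrightarrow> mat_multiple (ns!l') (F 2 l') (F 1 l')"
      using ptensor_relation3_eliminate[OF rel3 c012(2) l(1) _ l(2) F1] F0 l(1) by blast
    have "\<not> mat_multiple (ns!l) (F 0 l) (F 1 l)"
      using mat_multiple_sym F0 l by blast
    moreover have "\<forall>is js. valid_idx ns is \<and> valid_idx ns js \<longrightarrow>
        c 1 * ptensor ns (F 1) is js + c 0 * ptensor ns (F 0) is js + c 2 * ptensor ns (F 2) is js = 0"
      using rel3 by (simp add: add.commute add.left_commute)
    ultimately have F20: "\<forall>l'<length ns. l' \<noteq> l \<longrightarrow> mat_multiple (ns!l') (F 2 l') (F 0 l')"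
      using ptensor_relation3_eliminate[of ns "c 1" "F 1" "c 0" "F 0" "c 2" "F 2" l] c012(1) l(1) F0 F1
      by blast
    have "\<forall>l'<length ns. l' \<noteq> l \<longrightarrow> mat_multiple (ns!l') (F 1 l') (F 0 l')"
      using F21 F20 F2 mat_multiple_cancel by blast
    with F20 show ?thesis by blast
  qed
  then have "\<exists>k0. \<forall>i<3. \<forall>l<length ns. l \<noteq> k0 \<longrightarrow> mat_multiple (ns!l) (F i l) (F 0 l)"
    using mat_multiple_refl less_3_cases by metis
  then show ?thesis using that by blast
qed

lemma ptensor_sum_common_factors:
  assumes k: "k < length ns"
    and common: "\<forall>i\<in>I. \<forall>l<length ns. l \<noteq> k \<longrightarrow> (\<forall>p<ns!l. \<forall>q<ns!l. F i l p q = \<gamma> i l * G l p q)"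
    and v: "valid_idx ns is" "valid_idx ns js"
  shows "(\<Sum>i\<in>I. c i * ptensor ns (F i) is js)
       = ptensor ns (G(k := (\<lambda>p q. \<Sum>i\<in>I. c i * (\<Prod>l\<in>{..<length ns}-{k}. \<gamma> i l) * F i k p q))) is js"
proof -
  have "ptensor ns (F i) is js = (\<Prod>l\<in>{..<length ns}-{k}. \<gamma> i l) * ptensor ns (G(k := F i k)) is js"
    if "i \<in> I" for i
  proof -
    have "ptensor ns (F i) is js
        = (\<Prod>l<length ns. if l = k then 1 else \<gamma> i l) * ptensor ns (G(k := F i k)) is js"
      using common that by (intro ptensor_scale[OF _ v]) auto
    also have "(\<Prod>l<length ns. if l = k then 1 else \<gamma> i l) = (\<Prod>l\<in>{..<length ns}-{k}. \<gamma> i l)"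
      using k by (simp add: prod.remove[of "{..<length ns}" k])
    finally show ?thesis .
  qed
  then have "(\<Sum>i\<in>I. c i * ptensor ns (F i) is js)
      = (\<Sum>i\<in>I. (c i * (\<Prod>l\<in>{..<length ns}-{k}. \<gamma> i l)) * ptensor ns (G(k := F i k)) is js)"
    by (intro sum.cong) (simp_all add: mult.assoc)
  also have "\<dots> = ptensor ns (G(k := (\<lambda>p q. \<Sum>i\<in>I. c i * (\<Prod>l\<in>{..<length ns}-{k}. \<gamma> i l) * F i k p q))) is js"
    by (rule ptensor_linear[OF k, symmetric])
  finally show ?thesis .
qed

lemma mat_multiple_scalars:
  assumes "\<forall>i\<in>I. \<forall>l<length ns. l \<noteq> k \<longrightarrow> mat_multiple (ns!l) (F i l) (G l)"
  obtains \<gamma> where "\<forall>i\<in>I. \<forall>l<length ns. l \<noteq> k \<longrightarrow> (\<forall>p<ns!l. \<forall>q<ns!l. F i l p q = \<gamma> i l * G l p q)"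
proof -
  have "\<forall>i l. \<exists>g. i \<in> I \<and> l < length ns \<and> l \<noteq> k \<longrightarrow> (\<forall>p<ns!l. \<forall>q<ns!l. F i l p q = g * G l p q)"
    using assms unfolding mat_multiple_def by blast
  then obtain \<gamma> where "\<forall>i l. i \<in> I \<and> l < length ns \<and> l \<noteq> k \<longrightarrow>
      (\<forall>p<ns!l. \<forall>q<ns!l. F i l p q = \<gamma> i l * G l p q)"
    by metis
  then show ?thesis using that by blast
qed

text \<open>If all factors agree up to scalars away from mode \<open>k0\<close>, the relation collapses to a
  single product tensor whose \<open>k0\<close> factor must vanish.\<close>

lemma ptensor_relation3_at_mode:
  fixes F :: "nat \<Rightarrow> nat \<Rightarrow> nat \<Rightarrow> nat \<Rightarrow> complex"
  assumes rel: "\<forall>is js. valid_idx ns is \<and> valid_idx ns js \<longrightarrow> (\<Sum>i<3. c i * ptensor ns (F i) is js) = 0"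
    and c: "\<forall>i<3. c i \<noteq> 0" and F: "\<forall>i<3. \<forall>l<length ns. \<not> zero_mat (ns!l) (F i l)"
    and k0: "k0 < length ns"
    and mult: "\<forall>i<3. \<forall>l<length ns. l \<noteq> k0 \<longrightarrow> mat_multiple (ns!l) (F i l) (F 0 l)"
  obtains d where "\<forall>i<3. d i \<noteq> 0" "\<forall>p<ns!k0. \<forall>q<ns!k0. (\<Sum>i<3. d i * F i k0 p q) = 0"
proof -
  obtain \<gamma> where \<gamma>: "\<forall>i\<in>{..<3}. \<forall>l<length ns. l \<noteq> k0 \<longrightarrow>
      (\<forall>p<ns!l. \<forall>q<ns!l. F i l p q = \<gamma> i l * F 0 l p q)"
    using mat_multiple_scalars[of "{..<3}" ns k0 F "F 0"] mult by blast
  define d where "d i = c i * (\<Prod>l\<in>{..<length ns}-{k0}. \<gamma> i l)" for i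
  define W where "W = (\<lambda>p q. \<Sum>i<3. d i * F i k0 p q)"
  have "ptensor ns ((F 0)(k0 := W)) is js = (\<Sum>i<3. c i * ptensor ns (F i) is js)"
    if "valid_idx ns is" "valid_idx ns js" for "is" js
    unfolding W_def d_def by (rule ptensor_sum_common_factors[OF k0 \<gamma> that, symmetric])
  then obtain l where l: "l < length ns" "zero_mat (ns!l) (((F 0)(k0 := W)) l)"
    using ptensor_eq_0_imp_zero_factor rel by (metis (no_types, lifting))
  then have W: "zero_mat (ns!k0) W" using F by (cases "l = k0") auto
  have "d i \<noteq> 0" if i: "i < 3" for i
  proof -
    have "\<gamma> i l \<noteq> 0" if "l \<in> {..<length ns}-{k0}" for l
    proof
      assume "\<gamma> i l = 0"
      moreover have "\<forall>p<ns!l. \<forall>q<ns!l. F i l p q = \<gamma> i l * F 0 l p q" using \<gamma> i that by blast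
      ultimately have "zero_mat (ns!l) (F i l)" unfolding zero_mat_def by (metis mult_zero_left)
      then show False using F i that by auto
    qed
    then show ?thesis using c i unfolding d_def by (simp add: prod_zero_iff)
  qed
  then show ?thesis using that W unfolding W_def zero_mat_def by blast
qed

section \<open>Rank-one Hermitian matrices, swap invariance and real decompositions\<close>

definition outer :: "(nat \<Rightarrow> complex) \<Rightarrow> nat \<Rightarrow> nat \<Rightarrow> complex" where
  "outer a p q = a p * cnj (a q)"

definition skew :: "(nat \<Rightarrow> nat \<Rightarrow> complex) \<Rightarrow> nat \<Rightarrow> nat \<Rightarrow> complex" where
  "skew M p q = M p q - M q p"

definition zero_vec :: "nat \<Rightarrow> (nat \<Rightarrow> complex) \<Rightarrow> bool" where
  "zero_vec n a \<longleftrightarrow> (\<forall>p<n. a p = 0)"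

definition vec_multiple :: "nat \<Rightarrow> (nat \<Rightarrow> complex) \<Rightarrow> (nat \<Rightarrow> complex) \<Rightarrow> bool" where
  "vec_multiple n b a \<longleftrightarrow> (\<exists>\<beta>. \<forall>p<n. b p = \<beta> * a p)"

lemma hrank1_eq_ptensor: "hrank1 ns v = ptensor ns (\<lambda>l. outer (v l))"
  by (simp add: hrank1_def ptensor_def outer_def prod.distrib fun_eq_iff)

lemma outer_diag: "outer a p p = of_real ((cmod (a p))\<^sup>2)"
  unfolding outer_def by (metis complex_norm_square of_real_power)

lemma zero_mat_outer_iff: "zero_mat n (outer a) \<longleftrightarrow> zero_vec n a"
  unfolding zero_mat_def zero_vec_def outer_def by auto

lemma outer_scale:
  assumes "\<forall>p<n. b p = \<beta> * a p" "p < n" "q < n"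
  shows "outer b p q = of_real ((cmod \<beta>)\<^sup>2) * outer a p q"
proof -
  have "b p * cnj (b q) = (\<beta> * cnj \<beta>) * (a p * cnj (a q))" using assms by simp
  then show ?thesis unfolding outer_def complex_norm_square by simp
qed

lemma vec_multiple_if_outer_multiple:
  assumes "mat_multiple n (outer b) (outer a)" "\<not> zero_vec n a"
  shows "vec_multiple n b a"
proof -
  obtain \<gamma> where \<gamma>: "\<forall>p<n. \<forall>q<n. b p * cnj (b q) = \<gamma> * (a p * cnj (a q))"
    using assms(1) unfolding mat_multiple_def outer_def by blast
  obtain q0 where q0: "q0 < n" "a q0 \<noteq> 0" using assms(2) unfolding zero_vec_def by blast
  show ?thesis
  proof (cases "b q0 = 0")
    case True
    then have "\<gamma> = 0" using \<gamma> q0 by force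
    then show ?thesis using \<gamma> unfolding vec_multiple_def by (intro exI[of _ 0]) force
  next
    case False
    then show ?thesis using \<gamma> q0 unfolding vec_multiple_def
      by (intro exI[of _ "\<gamma> * cnj (a q0) / cnj (b q0)"]) (auto simp: field_simps)
  qed
qed

text \<open>A vector with symmetric \<open>a a\<^sup>*\<close> is real up to a common phase, which can be divided out.\<close>

lemma real_vec_if_outer_symmetric:
  assumes "zero_mat n (skew (outer a))"
  obtains v where "\<forall>p. v p \<in> \<real>" "\<forall>p<n. \<forall>q<n. outer v p q = outer a p q"
proof (cases "zero_vec n a")
  case True
  then show ?thesis using that[of "\<lambda>_. 0"] by (auto simp: outer_def zero_vec_def)
next
  case False
  then obtain p0 where p0: "p0 < n" "a p0 \<noteq> 0" unfolding zero_vec_def by blast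
  define z where "z = cnj (a p0) / of_real (cmod (a p0))"
  have zz: "z * cnj z = 1"
  proof -
    have "z * cnj z = (a p0 * cnj (a p0)) / (of_real (cmod (a p0)))\<^sup>2" unfolding z_def
      by (simp add: power2_eq_square field_simps)
    also have "\<dots> = 1" unfolding complex_norm_square[symmetric] using p0 by simp
    finally show ?thesis .
  qed
  have real: "a p * z \<in> \<real>" if "p < n" for p
  proof -
    have "a p * cnj (a p0) = a p0 * cnj (a p)"
      using assms that p0 unfolding zero_mat_def skew_def outer_def by auto
    then have "a p * cnj (a p0) \<in> \<real>" by (metis Reals_cnj_iff complex_cnj_cnj complex_cnj_mult mult.commute)
    then show ?thesis unfolding z_def by (simp add: Reals_divide)
  qed
  define v where "v = (\<lambda>p. complex_of_real (Re (a p * z)))"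
  have v: "v p = a p * z" if "p < n" for p unfolding v_def using real[OF that] of_real_Re by blast
  show ?thesis
  proof (rule that)
    show "\<forall>p. v p \<in> \<real>" unfolding v_def by simp
    show "\<forall>p<n. \<forall>q<n. outer v p q = outer a p q"
      using v zz unfolding outer_def by (simp add: algebra_simps)
  qed
qed

lemma real_multiple_of_outer:
  assumes "mat_multiple n (outer a) M" "\<not> zero_vec n a" "\<forall>p<n. M p p \<in> \<real>"
  obtains c :: real where "\<forall>p<n. \<forall>q<n. M p q = complex_of_real c * outer a p q"
proof -
  obtain \<gamma> where \<gamma>: "\<forall>p<n. \<forall>q<n. outer a p q = \<gamma> * M p q"
    using assms(1) unfolding mat_multiple_def by blast
  obtain p0 where p0: "p0 < n" "a p0 \<noteq> 0" using assms(2) unfolding zero_vec_def by blast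
  have "outer a p0 p0 \<noteq> 0" "outer a p0 p0 \<in> \<real>" using p0 by (auto simp: outer_diag)
  moreover have "outer a p0 p0 = \<gamma> * M p0 p0" using \<gamma> p0 by blast
  ultimately have "\<gamma> \<noteq> 0" "\<gamma> = outer a p0 p0 / M p0 p0" by auto
  then have "1 / \<gamma> \<in> \<real>" using assms(3) p0 \<open>outer a p0 p0 \<in> \<real>\<close> by (simp add: Reals_divide)
  then have "complex_of_real (Re (1 / \<gamma>)) = 1 / \<gamma>" by (simp add: complex_is_Real_iff)
  moreover have "\<forall>p<n. \<forall>q<n. M p q = 1 / \<gamma> * outer a p q" using \<gamma> \<open>\<gamma> \<noteq> 0\<close> by simp
  ultimately show ?thesis using that[of "Re (1 / \<gamma>)"] by simp
qed

text \<open>The three rank-one matrices are viewed as product tensors with two modes,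
  the vector \<open>a\<close> and its conjugate.\<close>

lemma outer_relation3:
  fixes a :: "nat \<Rightarrow> nat \<Rightarrow> complex"
  assumes rel: "\<forall>p<n. \<forall>q<n. (\<Sum>i<3. c i * outer (a i) p q) = 0"
    and c: "\<forall>i<3. c i \<noteq> 0" and a: "\<forall>i<3. \<not> zero_vec n (a i)"
  shows "\<forall>i<3. vec_multiple n (a i) (a 0)"
proof -
  define F :: "nat \<Rightarrow> nat \<Rightarrow> nat \<Rightarrow> nat \<Rightarrow> complex"
    where "F i l p q = (if l = 0 then a i p else cnj (a i p))" for i l p q
  have pt: "ptensor [n, n] (F i) is js = outer (a i) (is!0) (is!1)" for i "is" js
    unfolding ptensor_def F_def outer_def by (simp add: numeral_2_eq_2)
  have rel2: "\<forall>is js. valid_idx [n, n] is \<and> valid_idx [n, n] js \<longrightarrow>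
      (\<Sum>i<3. c i * ptensor [n, n] (F i) is js) = 0"
  proof (intro allI impI)
    fix "is" js assume "valid_idx [n, n] is \<and> valid_idx [n, n] js"
    then have "is!0 < n" "is!1 < n" unfolding valid_idx_def by auto
    then show "(\<Sum>i<3. c i * ptensor [n, n] (F i) is js) = 0" unfolding pt using rel by blast
  qed
  have F: "\<forall>i<3. \<forall>l<length [n, n]. \<not> zero_mat ([n, n]!l) (F i l)"
  proof (intro allI impI)
    fix i l :: nat assume "i < 3" "l < length [n, n]"
    then obtain p where "p < n" "a i p \<noteq> 0" using a unfolding zero_vec_def by auto
    then show "\<not> zero_mat ([n, n]!l) (F i l)"
      using \<open>l < length [n, n]\<close> unfolding zero_mat_def F_def by (auto simp: less_2_cases_iff)
  qed
  obtain k0 where k0: "\<forall>i<3. \<forall>l<length [n, n]. l \<noteq> k0 \<longrightarrow> mat_multiple ([n, n]!l) (F i l) (F 0 l)"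
    by (rule ptensor_relation3[OF rel2 c F])
  have n: "0 < n" using a[rule_format, of 0] unfolding zero_vec_def by auto
  show ?thesis
  proof (intro allI impI)
    fix i :: nat assume i: "i < 3"
    show "vec_multiple n (a i) (a 0)"
    proof (cases "k0 = 0")
      case True
      then have "mat_multiple n (F i 1) (F 0 1)" using k0[rule_format, OF i, of 1] by simp
      then obtain \<gamma> where "\<forall>p<n. \<forall>q<n. cnj (a i p) = \<gamma> * cnj (a 0 p)"
        unfolding mat_multiple_def F_def by auto
      then have "\<forall>p<n. a i p = cnj \<gamma> * a 0 p" using n by (metis complex_cnj_cnj complex_cnj_mult)
      then show ?thesis unfolding vec_multiple_def by blast
    next
      case False
      then have "mat_multiple n (F i 0) (F 0 0)" using k0[rule_format, OF i, of 0] by simp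
      then obtain \<gamma> where "\<forall>p<n. \<forall>q<n. a i p = \<gamma> * a 0 p"
        unfolding mat_multiple_def F_def by auto
      then show ?thesis unfolding vec_multiple_def using n by blast
    qed
  qed
qed

lemma skew_outer_real: "\<forall>p. v p \<in> \<real> \<Longrightarrow> skew (outer v) p q = 0"
  unfolding skew_def outer_def by (metis Reals_cnj_iff mult.commute diff_self)

definition swap_invariant :: "nat list \<Rightarrow> (nat list \<Rightarrow> nat list \<Rightarrow> complex) \<Rightarrow> bool" where
  "swap_invariant ns H \<longleftrightarrow> (\<forall>k<length ns. \<forall>is js. valid_idx ns is \<and> valid_idx ns js \<longrightarrow>
      H is js = H (is[k:=js!k]) (js[k:=is!k]))"

lemma ptensor_swap_diff:
  assumes "k < length ns" "valid_idx ns is" "valid_idx ns js"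
  shows "ptensor ns F is js - ptensor ns F (is[k:=js!k]) (js[k:=is!k])
       = ptensor ns (F(k := skew (F k))) is js"
  using assms
  by (simp add: ptensor_list_update valid_idx_length ptensor_fun_upd ptensor_split[of k] skew_def
      algebra_simps)

lemma ptensor_swap_eq:
  assumes "zero_mat (ns!k) (skew (F k))" "k < length ns" "valid_idx ns is" "valid_idx ns js"
  shows "ptensor ns F (is[k:=js!k]) (js[k:=is!k]) = ptensor ns F is js"
proof -
  have "ptensor ns (F(k := skew (F k))) is js = 0"
    using assms by (intro ptensor_zero_factor[of k]) auto
  then show ?thesis using ptensor_swap_diff[OF assms(2-4), of F] by simp
qed

lemma swap_invariant_ptensor:
  assumes "swap_invariant ns H"
    and "\<forall>is js. valid_idx ns is \<and> valid_idx ns js \<longrightarrow> H is js = ptensor ns F is js"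
    and "l < length ns"
  shows "zero_mat (ns!l) (skew (F l)) \<or> (\<exists>l'<length ns. l' \<noteq> l \<and> zero_mat (ns!l') (F l'))"
proof -
  have "ptensor ns (F(l := skew (F l))) is js = 0" if "valid_idx ns is" "valid_idx ns js" for "is" js
    using assms that ptensor_swap_diff[OF assms(3) that] valid_idx_swap[OF assms(3) that]
    unfolding swap_invariant_def by (metis diff_self)
  then obtain l' where "l' < length ns" "zero_mat (ns!l') ((F(l := skew (F l))) l')"
    using ptensor_eq_0_imp_zero_factor by blast
  then show ?thesis by (cases "l' = l") auto
qed

lemma swap_invariant_diff:
  "swap_invariant ns H \<Longrightarrow> swap_invariant ns G \<Longrightarrow> swap_invariant ns (\<lambda>is js. H is js - G is js)"
  unfolding swap_invariant_def by auto

lemma swap_invariant_scale: "swap_invariant ns H \<Longrightarrow> swap_invariant ns (\<lambda>is js. c * H is js)"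
  unfolding swap_invariant_def by auto

lemma swap_invariant_hrank1:
  assumes "\<forall>l<length ns. zero_mat (ns!l) (skew (outer (v l)))"
  shows "swap_invariant ns (hrank1 ns v)"
  unfolding swap_invariant_def hrank1_eq_ptensor
proof (intro allI impI)
  fix k "is" js assume "k < length ns" "valid_idx ns is \<and> valid_idx ns js"
  then show "ptensor ns (\<lambda>l. outer (v l)) is js
           = ptensor ns (\<lambda>l. outer (v l)) (is[k := js ! k]) (js[k := is ! k])"
    using assms ptensor_swap_eq[of ns k "\<lambda>l. outer (v l)"] by simp
qed

lemma swap_invariant_if_real_vectors:
  assumes "real_vectors u" "hdecomp ns H r lam u"
  shows "swap_invariant ns H"
  unfolding swap_invariant_def
proof (intro allI impI)
  fix k "is" js assume k: "k < length ns" and v: "valid_idx ns is \<and> valid_idx ns js"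
  have "hrank1 ns (u i) is js = hrank1 ns (u i) (is[k := js ! k]) (js[k := is ! k])" for i
  proof -
    have "swap_invariant ns (hrank1 ns (u i))"
      using assms(1) by (intro swap_invariant_hrank1) (simp add: skew_outer_real zero_mat_def real_vectors_def)
    then show ?thesis using k v unfolding swap_invariant_def by blast
  qed
  moreover have "H is' js' = (\<Sum>i<r. complex_of_real (lam i) * hrank1 ns (u i) is' js')"
    if "valid_idx ns is'" "valid_idx ns js'" for is' js'
    using assms(2) that unfolding hdecomp_def by blast
  ultimately show "H is js = H (is[k := js ! k]) (js[k := is ! k])"
    using v valid_idx_swap[OF k] by simp
qed

definition has_real_decomp :: "nat list \<Rightarrow> (nat list \<Rightarrow> nat list \<Rightarrow> complex) \<Rightarrow> nat \<Rightarrow> bool" where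
  "has_real_decomp ns H r \<longleftrightarrow> (\<exists>lam u. real_vectors u \<and> hdecomp ns H r lam u)"

lemma sum_lessThan_add: "(\<Sum>i<a+b. f i) = (\<Sum>i<a. f i) + (\<Sum>i<b. f (a+i))"
  for f :: "nat \<Rightarrow> 'a::comm_monoid_add"
  by (induction b) (auto simp: add.assoc)

lemma has_real_decompI:
  assumes "hdecomp ns H r lam u" "\<forall>i<r. \<forall>l<length ns. \<forall>p<ns!l. u i l p \<in> \<real>"
  shows "has_real_decomp ns H r"
proof -
  define u' where "u' = (\<lambda>i l p. complex_of_real (Re (u i l p)))"
  have "hrank1 ns (u i) is js = hrank1 ns (u' i) is js"
    if "i < r" "valid_idx ns is" "valid_idx ns js" for i "is" js
    using assms(2) that unfolding hrank1_def valid_idx_def u'_def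
    by (auto intro!: prod.cong arg_cong2[where f="(*)"] simp: complex_is_Real_iff)
  then have "hdecomp ns H r lam u'" using assms(1) unfolding hdecomp_def by simp
  moreover have "real_vectors u'" unfolding real_vectors_def u'_def by auto
  ultimately show ?thesis unfolding has_real_decomp_def by blast
qed

lemma has_real_decomp_mono:
  assumes "has_real_decomp ns H r" "r \<le> s"
  shows "has_real_decomp ns H s"
proof -
  obtain lam u where u: "real_vectors u" "hdecomp ns H r lam u"
    using assms(1) unfolding has_real_decomp_def by blast
  have "hdecomp ns H (r + (s - r)) (\<lambda>i. if i < r then lam i else 0) u"
    using u(2) unfolding hdecomp_def by (simp add: sum_lessThan_add)
  then show ?thesis using u(1) assms(2) unfolding has_real_decomp_def by auto
qed

lemma has_real_decomp_add:
  assumes "has_real_decomp ns G a" "has_real_decomp ns K b"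
  shows "has_real_decomp ns (\<lambda>is js. G is js + K is js) (a + b)"
proof -
  obtain l1 u1 where u1: "real_vectors u1" "hdecomp ns G a l1 u1"
    using assms(1) unfolding has_real_decomp_def by blast
  obtain l2 u2 where u2: "real_vectors u2" "hdecomp ns K b l2 u2"
    using assms(2) unfolding has_real_decomp_def by blast
  define l where "l = (\<lambda>i. if i < a then l1 i else l2 (i - a))"
  define u where "u = (\<lambda>i. if i < a then u1 i else u2 (i - a))"
  have "real_vectors u" using u1(1) u2(1) unfolding real_vectors_def u_def by auto
  moreover have "hdecomp ns (\<lambda>is js. G is js + K is js) (a + b) l u"
    using u1(2) u2(2) unfolding hdecomp_def sum_lessThan_add l_def u_def by auto
  ultimately show ?thesis unfolding has_real_decomp_def by blast
qed

lemma has_real_decomp_cong: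
  assumes "has_real_decomp ns G r" "\<forall>is js. valid_idx ns is \<and> valid_idx ns js \<longrightarrow> H is js = G is js"
  shows "has_real_decomp ns H r"
  using assms unfolding has_real_decomp_def hdecomp_def by metis

lemma has_real_decomp_zero:
  assumes "\<forall>is js. valid_idx ns is \<and> valid_idx ns js \<longrightarrow> H is js = 0"
  shows "has_real_decomp ns H r"
  using assms unfolding has_real_decomp_def hdecomp_def real_vectors_def
  by (intro exI[of _ "\<lambda>_. 0"] exI[of _ "\<lambda>_ _ _. 0"]) simp

lemma has_real_decomp_hrank1:
  assumes "\<forall>l<length ns. zero_mat (ns!l) (skew (outer (v l)))"
  shows "has_real_decomp ns (\<lambda>is js. complex_of_real c * hrank1 ns v is js) 1"
proof -
  have "\<forall>l. \<exists>w. l < length ns \<longrightarrow>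
      (\<forall>p. w p \<in> \<real>) \<and> (\<forall>p<ns!l. \<forall>q<ns!l. outer w p q = outer (v l) p q)"
    using real_vec_if_outer_symmetric assms by metis
  then obtain w where w: "\<And>l. l < length ns \<Longrightarrow>
      (\<forall>p. w l p \<in> \<real>) \<and> (\<forall>p<ns!l. \<forall>q<ns!l. outer (w l) p q = outer (v l) p q)"
    by metis
  have "hrank1 ns v is js = hrank1 ns w is js" if "valid_idx ns is" "valid_idx ns js" for "is" js
    unfolding hrank1_eq_ptensor using w that by (intro ptensor_cong) auto
  then have "hdecomp ns (\<lambda>is js. complex_of_real c * hrank1 ns v is js) 1 (\<lambda>_. c) (\<lambda>_. w)"
    unfolding hdecomp_def by simp
  then show ?thesis by (rule has_real_decompI) (use w in simp)
qed

section \<open>Decomposition of real symmetric matrices\<close>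

definition in_span :: "nat \<Rightarrow> nat \<Rightarrow> (nat \<Rightarrow> nat \<Rightarrow> complex) \<Rightarrow> (nat \<Rightarrow> complex) \<Rightarrow> bool" where
  "in_span n d a v \<longleftrightarrow> (\<exists>x. \<forall>p<n. v p = (\<Sum>i<d. x i * a i p))"

lemma in_span_zero: "in_span n d a (\<lambda>_. 0)"
  unfolding in_span_def by (intro exI[of _ "\<lambda>_. 0"]) simp

lemma in_span_add:
  assumes "in_span n d a v" "in_span n d a w"
  shows "in_span n d a (\<lambda>p. v p + w p)"
proof -
  obtain x y where "\<forall>p<n. v p = (\<Sum>i<d. x i * a i p)" "\<forall>p<n. w p = (\<Sum>i<d. y i * a i p)"
    using assms unfolding in_span_def by blast
  then show ?thesis unfolding in_span_def
    by (intro exI[of _ "\<lambda>i. x i + y i"]) (simp add: distrib_right sum.distrib)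
qed

lemma in_span_scale:
  assumes "in_span n d a v"
  shows "in_span n d a (\<lambda>p. c * v p)"
proof -
  obtain x where "\<forall>p<n. v p = (\<Sum>i<d. x i * a i p)" using assms unfolding in_span_def by blast
  then show ?thesis unfolding in_span_def
    by (intro exI[of _ "\<lambda>i. c * x i"]) (simp add: sum_distrib_left mult.assoc)
qed

lemma in_span_diff:
  "in_span n d a v \<Longrightarrow> in_span n d a w \<Longrightarrow> in_span n d a (\<lambda>p. v p - c * w p)"
  using in_span_add[of n d a v "\<lambda>p. - c * w p"] in_span_scale[of n d a w "- c"] by simp

lemma in_span_sum:
  assumes "finite Q" "\<forall>q\<in>Q. in_span n d a (f q)"
  shows "in_span n d a (\<lambda>p. \<Sum>q\<in>Q. c q * f q p)"
  using assms by (induction Q rule: finite_induct) (auto intro: in_span_zero in_span_add in_span_scale)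

lemma sum_times_lincomb:
  "(\<Sum>p<n. e p * (\<Sum>i<d. x i * a i p)) = (\<Sum>i<d. x i * (\<Sum>p<n. e p * a i p))"
  for e x :: "nat \<Rightarrow> 'a::comm_semiring_1"
proof -
  have "(\<Sum>p<n. e p * (\<Sum>i<d. x i * a i p)) = (\<Sum>p<n. \<Sum>i<d. x i * (e p * a i p))"
    by (simp add: sum_distrib_left mult_ac)
  also have "\<dots> = (\<Sum>i<d. x i * (\<Sum>p<n. e p * a i p))"
    by (subst sum.swap) (simp add: sum_distrib_left)
  finally show ?thesis .
qed

lemma functional_nonzero_on_generator:
  assumes "in_span n d a v" "(\<Sum>p<n. e p * v p) \<noteq> 0"
  shows "\<exists>i<d. (\<Sum>p<n. e p * a i p) \<noteq> 0"
proof (rule ccontr)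
  assume "\<not> ?thesis"
  then have zero: "(\<Sum>p<n. e p * a i p) = 0" if "i < d" for i using that by blast
  obtain x where "\<forall>p<n. v p = (\<Sum>i<d. x i * a i p)" using assms(1) unfolding in_span_def by blast
  then have "(\<Sum>p<n. e p * v p) = (\<Sum>p<n. e p * (\<Sum>i<d. x i * a i p))"
    by (intro sum.cong) auto
  also have "\<dots> = (\<Sum>i<d. x i * (\<Sum>p<n. e p * a i p))"
    by (rule sum_times_lincomb)
  also have "\<dots> = 0"
    using zero by (intro sum.neutral) simp
  finally show False using assms(2) by contradiction
qed

definition skip :: "nat \<Rightarrow> nat \<Rightarrow> nat" where
  "skip j i = (if i < j then i else Suc i)"

lemma sum_lessThan_Suc_skip:
  assumes "j \<le> d"
  shows "(\<Sum>i<Suc d. f i) = f j + (\<Sum>i<d. f (skip j i))"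
proof -
  have "x \<in> skip j ` {..<d}" if "x \<in> {..<Suc d} - {j}" for x
    using that assms unfolding skip_def
    by (cases "x < j") (auto intro: image_eqI[of _ _ x] image_eqI[of _ _ "x - 1"])
  then have "bij_betw (skip j) {..<d} ({..<Suc d} - {j})"
    unfolding bij_betw_def inj_on_def by (auto simp: skip_def)
  then have "(\<Sum>i<d. f (skip j i)) = sum f ({..<Suc d} - {j})"
    by (rule sum.reindex_bij_betw)
  moreover have "sum f {..<Suc d} = f j + sum f ({..<Suc d} - {j})"
    using assms by (intro sum.remove) auto
  ultimately show ?thesis by simp
qed

lemma lincomb_eliminate:
  fixes c \<phi> A :: "nat \<Rightarrow> 'a::field"
  assumes "j \<le> d" "\<phi> j \<noteq> 0" "(\<Sum>i<Suc d. c i * \<phi> i) = 0"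
  shows "(\<Sum>i<Suc d. c i * A i) = (\<Sum>i<d. c (skip j i) * (A (skip j i) - \<phi> (skip j i) / \<phi> j * A j))"
proof -
  have "c j = - (\<Sum>i<d. c (skip j i) * \<phi> (skip j i)) / \<phi> j"
    using assms sum_lessThan_Suc_skip[OF assms(1), of "\<lambda>i. c i * \<phi> i"]
    by (simp add: field_simps add_eq_0_iff)
  then have "(\<Sum>i<Suc d. c i * A i)
      = (\<Sum>i<d. c (skip j i) * A (skip j i)) - (\<Sum>i<d. c (skip j i) * \<phi> (skip j i)) / \<phi> j * A j"
    using sum_lessThan_Suc_skip[OF assms(1), of "\<lambda>i. c i * A i"] by simp
  also have "\<dots> = (\<Sum>i<d. c (skip j i) * A (skip j i) - c (skip j i) * \<phi> (skip j i) / \<phi> j * A j)"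
    by (simp add: sum_subtractf sum_divide_distrib sum_distrib_right)
  finally show ?thesis by (simp add: right_diff_distrib mult_ac)
qed

lemma in_span_kernel:
  assumes "in_span n (Suc d) a z" "(\<Sum>p<n. e p * z p) \<noteq> 0"
  obtains b where "\<And>v. in_span n (Suc d) a v \<Longrightarrow> (\<Sum>p<n. e p * v p) = 0 \<Longrightarrow> in_span n d b v"
proof -
  define \<phi> where "\<phi> = (\<lambda>i. \<Sum>p<n. e p * a i p)"
  obtain j where j: "j \<le> d" and \<phi>j: "\<phi> j \<noteq> 0"
    using functional_nonzero_on_generator[OF assms] unfolding \<phi>_def less_Suc_eq_le by blast
  define b where "b = (\<lambda>i p. a (skip j i) p - \<phi> (skip j i) / \<phi> j * a j p)"
  show ?thesis
  proof (rule that)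
    fix v assume v: "in_span n (Suc d) a v" and v0: "(\<Sum>p<n. e p * v p) = 0"
    obtain x where x: "\<forall>p<n. v p = (\<Sum>i<Suc d. x i * a i p)" using v unfolding in_span_def by blast
    have "(\<Sum>i<Suc d. x i * \<phi> i) = (\<Sum>p<n. e p * (\<Sum>i<Suc d. x i * a i p))"
      unfolding \<phi>_def by (rule sum_times_lincomb[symmetric])
    also have "\<dots> = (\<Sum>p<n. e p * v p)"
      using x by (intro sum.cong) auto
    finally have x\<phi>: "(\<Sum>i<Suc d. x i * \<phi> i) = 0"
      using v0 by simp
    have "v p = (\<Sum>i<d. x (skip j i) * b i p)" if "p < n" for p
    proof -
      have "v p = (\<Sum>i<Suc d. x i * a i p)" using x that by blast
      also have "\<dots> = (\<Sum>i<d. x (skip j i) * b i p)"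
        unfolding b_def by (rule lincomb_eliminate[OF j \<phi>j x\<phi>])
      finally show ?thesis .
    qed
    then show "in_span n d b v" unfolding in_span_def by (intro exI[of _ "\<lambda>i. x (skip j i)"]) blast
  qed
qed

lemma quadratic_form_nonzero:
  assumes "\<forall>p<n. \<forall>q<n. M p q = M q p" "\<not> zero_mat n M"
  obtains e :: "nat \<Rightarrow> complex" where "\<forall>p. e p \<in> \<real>" "(\<Sum>p<n. e p * (\<Sum>q<n. M p q * e q)) \<noteq> 0"
proof -
  define e :: "nat \<Rightarrow> nat \<Rightarrow> nat \<Rightarrow> complex"
    where "e p q t = (if t = p then 1 else 0) + (if t = q then 1 else 0)" for p q t
  have delta: "(\<Sum>t<n. f t * (if t = p then 1 else 0)) = f p" if "p < n" for f :: "nat \<Rightarrow> complex" and p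
    using that by (simp add: if_distrib[of "\<lambda>x. f _ * x"] cong: if_cong)
  have sum_e: "(\<Sum>t<n. f t * e p q t) = f p + f q" if "p < n" "q < n" for f p q
    unfolding e_def distrib_left sum.distrib using delta that by simp
  have Q: "(\<Sum>t<n. e p q t * (\<Sum>s<n. M t s * e p q s)) = M p p + M p q + M q p + M q q"
    if "p < n" "q < n" for p q
  proof -
    have "(\<Sum>t<n. e p q t * (\<Sum>s<n. M t s * e p q s)) = (\<Sum>t<n. (M t p + M t q) * e p q t)"
      using sum_e that by (intro sum.cong) (auto simp: mult.commute)
    also have "\<dots> = M p p + M p q + M q p + M q q" using sum_e[of p q "\<lambda>t. M t p + M t q"] that by simp
    finally show ?thesis .
  qed
  have real: "\<forall>t. e p q t \<in> \<real>" for p q unfolding e_def by auto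
  show ?thesis
  proof (cases "\<exists>p<n. M p p \<noteq> 0")
    case True
    then obtain p where "p < n" "M p p \<noteq> 0" by blast
    then show ?thesis using that[OF real[of p p]] Q[of p p] by simp
  next
    case False
    obtain p q where "p < n" "q < n" "M p q \<noteq> 0" using assms(2) unfolding zero_mat_def by blast
    moreover have "M q p = M p q" "M p p = 0" "M q q = 0" using assms(1) False calculation by auto
    ultimately show ?thesis using that[OF real[of p q]] Q[of p q] by simp
  qed
qed

text \<open>One step of Wedderburn rank reduction with a real test vector \<open>e\<close>: subtracting
  \<open>z z\<^sup>T / (e\<^sup>T z)\<close>, where \<open>z = M e\<close>, leaves a matrix whose columns are annihilated by \<open>e\<close>,
  so one generator of the column span can be dropped.\<close>

lemma rank_one_deflation:
  assumes MR: "\<forall>p<n. \<forall>q<n. M p q \<in> \<real> \<and> M p q = M q p" and M: "\<not> zero_mat n M"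
    and span: "\<forall>q<n. in_span n (Suc d) a (\<lambda>p. M p q)"
  obtains M' b z c where "\<forall>p<n. \<forall>q<n. M' p q \<in> \<real> \<and> M' p q = M' q p"
    "\<forall>q<n. in_span n d b (\<lambda>p. M' p q)" "\<forall>p<n. z p \<in> \<real>"
    "\<forall>p<n. \<forall>q<n. M p q = M' p q + complex_of_real c * outer z p q"
proof -
  have sym: "\<forall>p<n. \<forall>q<n. M p q = M q p" using MR by blast
  obtain e where e: "\<forall>p. e p \<in> \<real>" and \<sigma>: "(\<Sum>p<n. e p * (\<Sum>q<n. M p q * e q)) \<noteq> 0"
    by (rule quadratic_form_nonzero[OF sym M])
  define z where "z = (\<lambda>p. \<Sum>q<n. M p q * e q)"
  define \<sigma> where "\<sigma> = (\<Sum>p<n. e p * z p)"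
  have \<sigma>0: "\<sigma> \<noteq> 0" using \<sigma> unfolding \<sigma>_def z_def .
  have zR: "\<forall>p<n. z p \<in> \<real>" unfolding z_def using MR e by (auto intro!: sum_in_Reals)
  then have \<sigma>R: "\<sigma> \<in> \<real>" unfolding \<sigma>_def using e by (auto intro!: sum_in_Reals)
  have z_span: "in_span n (Suc d) a z"
    unfolding z_def using in_span_sum[of "{..<n}" n "Suc d" a "\<lambda>q p. M p q" e] span
    by (simp add: mult.commute)
  obtain b where b: "\<And>v. in_span n (Suc d) a v \<Longrightarrow> (\<Sum>p<n. e p * v p) = 0 \<Longrightarrow> in_span n d b v"
    using in_span_kernel[OF z_span] \<sigma>0 unfolding \<sigma>_def by blast
  define M' where "M' = (\<lambda>p q. M p q - z q / \<sigma> * z p)"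
  define c where "c = 1 / Re \<sigma>"
  have c: "complex_of_real c = 1 / \<sigma>" unfolding c_def using \<sigma>R by (simp add: Reals_divide)
  show ?thesis
  proof
    show "\<forall>p<n. \<forall>q<n. M' p q \<in> \<real> \<and> M' p q = M' q p"
      unfolding M'_def using MR zR \<sigma>R by (auto simp: mult.commute)
    show "\<forall>q<n. in_span n d b (\<lambda>p. M' p q)"
    proof (intro allI impI)
      fix q assume q: "q < n"
      have "(\<Sum>p<n. e p * M p q) = z q"
        unfolding z_def using sym q by (intro sum.cong) (auto simp: mult.commute)
      then have "(\<Sum>p<n. e p * M' p q) = z q - z q / \<sigma> * \<sigma>"
        unfolding M'_def \<sigma>_def
        by (simp add: right_diff_distrib sum_subtractf sum_distrib_left sum_divide_distrib mult_ac)
      then have "(\<Sum>p<n. e p * M' p q) = 0" using \<sigma>0 by simp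
      moreover have "in_span n (Suc d) a (\<lambda>p. M' p q)"
        unfolding M'_def by (rule in_span_diff[OF span[rule_format, OF q] z_span])
      ultimately show "in_span n d b (\<lambda>p. M' p q)" by (rule b[rotated])
    qed
    show "\<forall>p<n. z p \<in> \<real>" by (rule zR)
    show "\<forall>p<n. \<forall>q<n. M p q = M' p q + complex_of_real c * outer z p q"
      unfolding M'_def outer_def c using zR by (simp add: Reals_cnj_iff)
  qed
qed

lemma real_symmetric_mat_decomp:
  assumes "\<forall>p<n. \<forall>q<n. M p q \<in> \<real> \<and> M p q = M q p"
    and "\<forall>q<n. in_span n d a (\<lambda>p. M p q)"
  shows "\<exists>\<mu> w. (\<forall>j<d. \<forall>p<n. w j p \<in> \<real>)
     \<and> (\<forall>p<n. \<forall>q<n. M p q = (\<Sum>j<d. complex_of_real (\<mu> j) * outer (w j) p q))"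
  using assms
proof (induction d arbitrary: M a)
  case 0
  then show ?case by (auto simp: in_span_def)
next
  case (Suc d)
  show ?case
  proof (cases "zero_mat n M")
    case True
    then show ?thesis unfolding zero_mat_def by (intro exI[of _ "\<lambda>_. 0"] exI[of _ "\<lambda>_ _. 0"]) auto
  next
    case False
    obtain M' b z c where M': "\<forall>p<n. \<forall>q<n. M' p q \<in> \<real> \<and> M' p q = M' q p"
      "\<forall>q<n. in_span n d b (\<lambda>p. M' p q)" and z: "\<forall>p<n. z p \<in> \<real>"
      and M: "\<forall>p<n. \<forall>q<n. M p q = M' p q + complex_of_real c * outer z p q"
      using rank_one_deflation[OF Suc.prems(1) False Suc.prems(2)] by blast
    obtain \<mu> w where w: "\<forall>j<d. \<forall>p<n. w j p \<in> \<real>"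
      "\<forall>p<n. \<forall>q<n. M' p q = (\<Sum>j<d. complex_of_real (\<mu> j) * outer (w j) p q)"
      using Suc.IH[OF M'] by blast
    show ?thesis
      using w z M
      by (intro exI[of _ "\<mu>(d := c)"] exI[of _ "w(d := z)"]) (auto simp: less_Suc_eq)
  qed
qed

section \<open>Swap-invariant tensors of complex rank at most three\<close>

definition skew_factors :: "(nat \<Rightarrow> nat \<Rightarrow> complex) \<Rightarrow> nat \<Rightarrow> nat \<Rightarrow> nat \<Rightarrow> nat \<Rightarrow> complex" where
  "skew_factors v k = (\<lambda>l. outer (v l))(k := skew (outer (v k)))"

definition nonreal_term :: "nat list \<Rightarrow> real \<Rightarrow> (nat \<Rightarrow> nat \<Rightarrow> complex) \<Rightarrow> bool" where
  "nonreal_term ns c v \<longleftrightarrow> c \<noteq> 0 \<and> (\<forall>l<length ns. \<not> zero_vec (ns!l) (v l))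
     \<and> (\<exists>l<length ns. \<not> zero_mat (ns!l) (skew (outer (v l))))"

lemma skew_relation:
  assumes si: "swap_invariant ns H" and hd: "hdecomp ns H r lam u" and k: "k < length ns"
  shows "\<forall>is js. valid_idx ns is \<and> valid_idx ns js \<longrightarrow>
    (\<Sum>i<r. complex_of_real (lam i) * ptensor ns (skew_factors (u i) k) is js) = 0"
proof (intro allI impI)
  fix "is" js assume v: "valid_idx ns is \<and> valid_idx ns js"
  define is_sw where "is_sw = is[k:=js!k]"
  define js_sw where "js_sw = js[k:=is!k]"
  have v': "valid_idx ns is_sw" "valid_idx ns js_sw" unfolding is_sw_def js_sw_def using valid_idx_swap k v by auto
  have swap_diff: "ptensor ns (skew_factors (u i) k) is js
      = ptensor ns (\<lambda>l. outer (u i l)) is js - ptensor ns (\<lambda>l. outer (u i l)) is_sw js_sw" for i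
    unfolding skew_factors_def is_sw_def js_sw_def
    using ptensor_swap_diff[OF k, of "is" js "\<lambda>l. outer (u i l)"] v by simp
  have "(\<Sum>i<r. complex_of_real (lam i) * ptensor ns (skew_factors (u i) k) is js)
      = (\<Sum>i<r. complex_of_real (lam i) * ptensor ns (\<lambda>l. outer (u i l)) is js)
        - (\<Sum>i<r. complex_of_real (lam i) * ptensor ns (\<lambda>l. outer (u i l)) is_sw js_sw)"
    unfolding swap_diff by (simp add: right_diff_distrib sum_subtractf)
  also have "\<dots> = H is js - H is_sw js_sw"
    using hd v v' unfolding hdecomp_def hrank1_eq_ptensor by simp
  also have "\<dots> = 0" using si k v unfolding swap_invariant_def is_sw_def js_sw_def by simp
  finally show "(\<Sum>i<r. complex_of_real (lam i) * ptensor ns (skew_factors (u i) k) is js) = 0" .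
qed

lemma skew_factors_nonzero:
  assumes "\<forall>l<length ns. \<not> zero_vec (ns!l) (v l)" "\<not> zero_mat (ns!k) (skew (outer (v k)))"
  shows "\<forall>l<length ns. \<not> zero_mat (ns!l) (skew_factors v k l)"
  using assms unfolding skew_factors_def by (auto simp: zero_mat_outer_iff)

lemma ptensor_skew_factors_eq_0:
  assumes "zero_mat (ns!k) (skew (outer (v k)))" "k < length ns" "valid_idx ns is" "valid_idx ns js"
  shows "ptensor ns (skew_factors v k) is js = 0"
  using assms by (intro ptensor_zero_factor[of k]) (simp_all add: skew_factors_def)

lemma vec_multiple_refl: "vec_multiple n a a"
  unfolding vec_multiple_def by (intro exI[of _ 1]) simp

lemma vec_multiple_if_skew_factors_multiple:
  assumes "mat_multiple n (skew_factors w k l) (skew_factors v k l)" "l \<noteq> k" "\<not> zero_vec n (v l)"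
  shows "vec_multiple n (w l) (v l)"
  using vec_multiple_if_outer_multiple assms unfolding skew_factors_def by simp

lemma swap_invariant_zero:
  assumes "\<forall>is js. valid_idx ns is \<and> valid_idx ns js \<longrightarrow> H is js = 0"
  shows "swap_invariant ns H"
  unfolding swap_invariant_def using assms valid_idx_swap by simp

lemma real_term_cases:
  assumes "\<not> nonreal_term ns c v"
  shows "(\<forall>is js. valid_idx ns is \<and> valid_idx ns js \<longrightarrow> complex_of_real c * hrank1 ns v is js = 0)
      \<or> (\<forall>l<length ns. zero_mat (ns!l) (skew (outer (v l))))"
proof (cases "c \<noteq> 0 \<and> (\<forall>l<length ns. \<not> zero_vec (ns!l) (v l))")
  case True
  then show ?thesis using assms unfolding nonreal_term_def by blast
next
  case False
  moreover have "hrank1 ns v is js = 0"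
    if "l < length ns" "zero_vec (ns!l) (v l)" "valid_idx ns is" "valid_idx ns js" for l "is" js
    unfolding hrank1_eq_ptensor using that
    by (intro ptensor_zero_factor[of l]) (simp_all add: zero_mat_outer_iff)
  ultimately show ?thesis by auto
qed

lemma swap_invariant_real_term:
  assumes "\<not> nonreal_term ns c v"
  shows "swap_invariant ns (\<lambda>is js. complex_of_real c * hrank1 ns v is js)"
  using real_term_cases[OF assms]
proof
  assume "\<forall>l<length ns. zero_mat (ns!l) (skew (outer (v l)))"
  then show ?thesis by (intro swap_invariant_scale swap_invariant_hrank1)
qed (rule swap_invariant_zero)

lemma has_real_decomp_real_term:
  assumes "\<not> nonreal_term ns c v"
  shows "has_real_decomp ns (\<lambda>is js. complex_of_real c * hrank1 ns v is js) 1"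
  using real_term_cases[OF assms]
proof
  assume "\<forall>l<length ns. zero_mat (ns!l) (skew (outer (v l)))"
  then show ?thesis by (rule has_real_decomp_hrank1)
qed (rule has_real_decomp_zero)

lemma hdecomp_remove_term:
  assumes "hdecomp ns H (Suc r) lam u" "i \<le> r"
  shows "hdecomp ns (\<lambda>is js. H is js - complex_of_real (lam i) * hrank1 ns (u i) is js) r
           (\<lambda>j. lam (skip i j)) (\<lambda>j. u (skip i j))"
  unfolding hdecomp_def
proof (intro allI impI)
  fix "is" js assume v: "valid_idx ns is \<and> valid_idx ns js"
  define f where "f i = complex_of_real (lam i) * hrank1 ns (u i) is js" for i
  have "H is js = (\<Sum>i<Suc r. f i)" using assms(1) v unfolding hdecomp_def f_def by blast
  also have "\<dots> = f i + (\<Sum>j<r. f (skip i j))" by (rule sum_lessThan_Suc_skip[OF assms(2)])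
  finally show "H is js - complex_of_real (lam i) * hrank1 ns (u i) is js =
      (\<Sum>j<r. complex_of_real (lam (skip i j)) * hrank1 ns (u (skip i j)) is js)"
    unfolding f_def by simp
qed

lemma hdecomp_permute:
  assumes "hdecomp ns H r lam u" "bij_betw \<pi> {..<r} {..<r}"
  shows "hdecomp ns H r (lam \<circ> \<pi>) (u \<circ> \<pi>)"
  unfolding hdecomp_def
proof (intro allI impI)
  fix "is" js assume "valid_idx ns is \<and> valid_idx ns js"
  then show "H is js = (\<Sum>i<r. complex_of_real ((lam \<circ> \<pi>) i) * hrank1 ns ((u \<circ> \<pi>) i) is js)"
    using assms(1) sum.reindex_bij_betw[OF assms(2), of "\<lambda>i. complex_of_real (lam i) * hrank1 ns (u i) is js"]
    unfolding hdecomp_def by simp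
qed

lemma has_real_decomp_remove_real_term:
  assumes si: "swap_invariant ns H" and hd: "hdecomp ns H (Suc r) lam u" and i: "i \<le> r"
    and real: "\<not> nonreal_term ns (lam i) (u i)"
    and shorter: "\<And>H' lam' u'. swap_invariant ns H' \<Longrightarrow> hdecomp ns H' r lam' u' \<Longrightarrow> has_real_decomp ns H' r"
  shows "has_real_decomp ns H (Suc r)"
proof -
  let ?T = "\<lambda>is js. complex_of_real (lam i) * hrank1 ns (u i) is js"
  have "has_real_decomp ns (\<lambda>is js. H is js - ?T is js) r"
    using shorter[OF swap_invariant_diff[OF si swap_invariant_real_term[OF real]] hdecomp_remove_term[OF hd i]] .
  from has_real_decomp_add[OF this has_real_decomp_real_term[OF real]] have "has_real_decomp ns H (r + 1)"
    by (rule has_real_decomp_cong) simp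
  then show ?thesis by simp
qed

text \<open>With \<open>u\<^sub>i\<^sub>l = \<beta>\<^sub>i\<^sub>l u\<^sub>0\<^sub>l\<close> for \<open>l \<noteq> k\<close>, the terms collapse to one product tensor with
  mode-\<open>k\<close> factor \<open>M = \<Sum>\<^sub>i \<lambda>\<^sub>i (\<Prod>\<^sub>l\<^sub>\<noteq>\<^sub>k |\<beta>\<^sub>i\<^sub>l|\<^sup>2) u\<^sub>i\<^sub>k u\<^sub>i\<^sub>k\<^sup>*\<close>.\<close>

lemma hdecomp_common_factors:
  assumes hd: "hdecomp ns H s lam u" and k: "k < length ns"
    and common: "\<forall>i<s. \<forall>l<length ns. l \<noteq> k \<longrightarrow> vec_multiple (ns!l) (u i l) (u 0 l)"
  obtains M where "\<forall>is js. valid_idx ns is \<and> valid_idx ns js \<longrightarrow>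
      H is js = ptensor ns ((\<lambda>l. outer (u 0 l))(k := M)) is js"
    "\<forall>p q. M q p = cnj (M p q)" "\<forall>q<ns!k. in_span (ns!k) s (\<lambda>i. u i k) (\<lambda>p. M p q)"
proof -
  have "\<forall>i l. \<exists>\<beta>. i < s \<and> l < length ns \<and> l \<noteq> k \<longrightarrow> (\<forall>p<ns!l. u i l p = \<beta> * u 0 l p)"
    using common unfolding vec_multiple_def by blast
  then obtain B where B: "\<forall>i l. i < s \<and> l < length ns \<and> l \<noteq> k \<longrightarrow> (\<forall>p<ns!l. u i l p = B i l * u 0 l p)"
    by metis
  define \<gamma> where "\<gamma> i l = complex_of_real ((cmod (B i l))\<^sup>2)" for i l
  define g where "g i = complex_of_real (lam i) * (\<Prod>l\<in>{..<length ns}-{k}. \<gamma> i l)" for i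
  define M where "M p q = (\<Sum>i<s. g i * outer (u i k) p q)" for p q
  have scale: "\<forall>i\<in>{..<s}. \<forall>l<length ns. l \<noteq> k \<longrightarrow>
      (\<forall>p<ns!l. \<forall>q<ns!l. outer (u i l) p q = \<gamma> i l * outer (u 0 l) p q)"
  proof (intro ballI allI impI)
    fix i l p q assume il: "i \<in> {..<s}" "l < length ns" "l \<noteq> k" and pq: "p < ns!l" "q < ns!l"
    then have "\<forall>p<ns!l. u i l p = B i l * u 0 l p" using B by blast
    then show "outer (u i l) p q = \<gamma> i l * outer (u 0 l) p q"
      unfolding \<gamma>_def using outer_scale pq by simp
  qed
  show ?thesis
  proof
    show "\<forall>is js. valid_idx ns is \<and> valid_idx ns js \<longrightarrow>
        H is js = ptensor ns ((\<lambda>l. outer (u 0 l))(k := M)) is js"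
      using hd ptensor_sum_common_factors[OF k scale] unfolding hdecomp_def hrank1_eq_ptensor M_def g_def
      by (simp add: mult.assoc)
    have "cnj (g i) = g i" for i unfolding g_def \<gamma>_def by simp
    then show "\<forall>p q. M q p = cnj (M p q)"
      unfolding M_def cnj_sum outer_def by (simp add: mult_ac)
    show "\<forall>q<ns!k. in_span (ns!k) s (\<lambda>i. u i k) (\<lambda>p. M p q)"
      unfolding in_span_def M_def outer_def
      by (intro allI impI exI[of _ "\<lambda>i. g i * cnj (u i k q)" for q]) (simp add: mult_ac)
  qed
qed

lemma swap_invariant_ptensor_outer:
  assumes si: "swap_invariant ns H" and k: "k < length ns"
    and H: "\<forall>is js. valid_idx ns is \<and> valid_idx ns js \<longrightarrow> H is js = ptensor ns ((\<lambda>l. outer (v l))(k := M)) is js"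
    and v: "\<forall>l<length ns. l \<noteq> k \<longrightarrow> \<not> zero_vec (ns!l) (v l)"
  shows "zero_mat (ns!k) (skew M)"
    and "\<not> zero_mat (ns!k) M \<Longrightarrow> \<forall>l<length ns. l \<noteq> k \<longrightarrow> zero_mat (ns!l) (skew (outer (v l)))"
proof -
  have F: "\<not> zero_mat (ns!l) (((\<lambda>l. outer (v l))(k := M)) l)" if "l < length ns" "l \<noteq> k" for l
    using v that by (simp add: zero_mat_outer_iff)
  show "zero_mat (ns!k) (skew M)"
    using swap_invariant_ptensor[OF si H k] F by auto
  show "\<forall>l<length ns. l \<noteq> k \<longrightarrow> zero_mat (ns!l) (skew (outer (v l)))" if "\<not> zero_mat (ns!k) M"
  proof (intro allI impI)
    fix l assume l: "l < length ns" "l \<noteq> k"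
    have "\<not> zero_mat (ns!l') (((\<lambda>l. outer (v l))(k := M)) l')" if "l' < length ns" "l' \<noteq> l" for l'
      using F that \<open>\<not> zero_mat (ns!k) M\<close> by (cases "l' = k") auto
    then show "zero_mat (ns!l) (skew (outer (v l)))"
      using swap_invariant_ptensor[OF si H l(1)] l(2) by auto
  qed
qed

text \<open>Expand \<open>M = \<Sum>\<^sub>j \<mu>\<^sub>j w\<^sub>j w\<^sub>j\<^sup>T\<close> linearly in mode \<open>k\<close>.\<close>

lemma has_real_decomp_ptensor_real:
  assumes k: "k < length ns"
    and H: "\<forall>is js. valid_idx ns is \<and> valid_idx ns js \<longrightarrow> H is js = ptensor ns ((\<lambda>l. outer (v l))(k := M)) is js"
    and symmetric: "\<forall>l<length ns. l \<noteq> k \<longrightarrow> zero_mat (ns!l) (skew (outer (v l)))"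
    and MR: "\<forall>p<ns!k. \<forall>q<ns!k. M p q \<in> \<real> \<and> M p q = M q p"
    and span: "\<forall>q<ns!k. in_span (ns!k) s a (\<lambda>p. M p q)"
  shows "has_real_decomp ns H s"
proof -
  obtain \<mu> w where w: "\<forall>j<s. \<forall>p<ns!k. w j p \<in> \<real>"
    and M: "\<forall>p<ns!k. \<forall>q<ns!k. M p q = (\<Sum>j<s. complex_of_real (\<mu> j) * outer (w j) p q)"
    using real_symmetric_mat_decomp[OF MR span] by blast
  have "\<forall>l. \<exists>V. l < length ns \<and> l \<noteq> k \<longrightarrow>
      (\<forall>p. V p \<in> \<real>) \<and> (\<forall>p<ns!l. \<forall>q<ns!l. outer V p q = outer (v l) p q)"
    using real_vec_if_outer_symmetric symmetric by metis
  then obtain V where V: "\<forall>l. l < length ns \<and> l \<noteq> k \<longrightarrow>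
      (\<forall>p. V l p \<in> \<real>) \<and> (\<forall>p<ns!l. \<forall>q<ns!l. outer (V l) p q = outer (v l) p q)"
    by metis
  define u where "u j l = (if l = k then w j else V l)" for j l
  have "hdecomp ns H s \<mu> u"
    unfolding hdecomp_def hrank1_eq_ptensor
  proof (intro allI impI)
    fix "is" js assume ij: "valid_idx ns is \<and> valid_idx ns js"
    have "H is js = ptensor ns ((\<lambda>l. outer (V l))(k := (\<lambda>p q. \<Sum>j<s. complex_of_real (\<mu> j) * outer (w j) p q))) is js"
      using H ij M V by (auto intro!: ptensor_cong)
    also have "\<dots> = (\<Sum>j<s. complex_of_real (\<mu> j) * ptensor ns ((\<lambda>l. outer (V l))(k := outer (w j))) is js)"
      by (rule ptensor_linear[OF k])
    also have "\<dots> = (\<Sum>j<s. complex_of_real (\<mu> j) * ptensor ns (\<lambda>l. outer (u j l)) is js)"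
      unfolding u_def by (intro sum.cong refl arg_cong2[where f="(*)"] arg_cong[where f="\<lambda>F. ptensor ns F is js"])
        (auto simp: fun_eq_iff)
    finally show "H is js = (\<Sum>j<s. complex_of_real (\<mu> j) * ptensor ns (\<lambda>l. outer (u j l)) is js)" .
  qed
  moreover have "\<forall>j<s. \<forall>l<length ns. \<forall>p<ns!l. u j l p \<in> \<real>"
    unfolding u_def using w V by auto
  ultimately show ?thesis by (rule has_real_decompI)
qed

lemma has_real_decomp_ptensor:
  assumes si: "swap_invariant ns H" and k: "k < length ns"
    and H: "\<forall>is js. valid_idx ns is \<and> valid_idx ns js \<longrightarrow> H is js = ptensor ns ((\<lambda>l. outer (v l))(k := M)) is js"
    and v: "\<forall>l<length ns. l \<noteq> k \<longrightarrow> \<not> zero_vec (ns!l) (v l)"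
    and herm: "\<forall>p q. M q p = cnj (M p q)"
    and span: "\<forall>q<ns!k. in_span (ns!k) s a (\<lambda>p. M p q)"
  shows "has_real_decomp ns H s"
proof (cases "zero_mat (ns!k) M")
  case True
  then have "\<forall>is js. valid_idx ns is \<and> valid_idx ns js \<longrightarrow> H is js = 0"
    using H k by (simp add: ptensor_zero_factor[of k])
  then show ?thesis by (rule has_real_decomp_zero)
next
  case False
  have "\<forall>p<ns!k. \<forall>q<ns!k. M p q \<in> \<real> \<and> M p q = M q p"
    using swap_invariant_ptensor_outer(1)[OF si k H v] herm
    unfolding zero_mat_def skew_def by (metis Reals_cnj_iff eq_iff_diff_eq_0)
  then show ?thesis
    using has_real_decomp_ptensor_real[OF k H _ _ span] swap_invariant_ptensor_outer(2)[OF si k H v False]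
    by blast
qed

lemma has_real_decomp_common_factors:
  assumes si: "swap_invariant ns H" and hd: "hdecomp ns H s lam u" and k: "k < length ns"
    and common: "\<forall>i<s. \<forall>l<length ns. l \<noteq> k \<longrightarrow> vec_multiple (ns!l) (u i l) (u 0 l)"
    and nonzero: "\<forall>l<length ns. l \<noteq> k \<longrightarrow> \<not> zero_vec (ns!l) (u 0 l)"
  shows "has_real_decomp ns H s"
proof -
  obtain M where "\<forall>is js. valid_idx ns is \<and> valid_idx ns js \<longrightarrow>
      H is js = ptensor ns ((\<lambda>l. outer (u 0 l))(k := M)) is js"
    "\<forall>p q. M q p = cnj (M p q)" "\<forall>q<ns!k. in_span (ns!k) s (\<lambda>i. u i k) (\<lambda>p. M p q)"
    by (rule hdecomp_common_factors[OF hd k common])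
  then show ?thesis using has_real_decomp_ptensor[OF si k _ nonzero] by blast
qed

lemma skew_relation_single_term:
  assumes si: "swap_invariant ns H" and hd: "hdecomp ns H r lam u" and i: "i < r" and k: "k < length ns"
    and single: "lam i \<noteq> 0" "\<forall>l<length ns. \<not> zero_vec (ns!l) (u i l)"
      "\<not> zero_mat (ns!k) (skew (outer (u i k)))"
    and others: "\<forall>i'<r. i' \<noteq> i \<longrightarrow> zero_mat (ns!k) (skew (outer (u i' k)))"
  shows False
proof -
  have "ptensor ns (skew_factors (u i) k) is js = 0" if "valid_idx ns is" "valid_idx ns js" for "is" js
  proof -
    have "(\<Sum>i'\<in>{..<r}-{i}. complex_of_real (lam i') * ptensor ns (skew_factors (u i') k) is js) = 0"
      using others k that by (intro sum.neutral) (simp add: ptensor_skew_factors_eq_0)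
    moreover have "(\<Sum>i'<r. complex_of_real (lam i') * ptensor ns (skew_factors (u i') k) is js) = 0"
      using skew_relation[OF si hd k] that by blast
    ultimately show ?thesis using i single(1) by (simp add: sum.remove[of "{..<r}" i])
  qed
  then obtain l where "l < length ns" "zero_mat (ns!l) (skew_factors (u i) k l)"
    using ptensor_eq_0_imp_zero_factor by blast
  then show False using skew_factors_nonzero[OF single(2,3)] by blast
qed

lemma has_real_decomp_len0: "hdecomp ns H 0 lam u \<Longrightarrow> has_real_decomp ns H 0"
  unfolding hdecomp_def by (intro has_real_decomp_zero) simp

lemma has_real_decomp_len1:
  assumes si: "swap_invariant ns H" and hd: "hdecomp ns H 1 lam u"
  shows "has_real_decomp ns H 1"
proof (cases "nonreal_term ns (lam 0) (u 0)")
  case True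
  then obtain k where "k < length ns" "\<not> zero_mat (ns!k) (skew (outer (u 0 k)))"
    unfolding nonreal_term_def by blast
  then show ?thesis using skew_relation_single_term[OF si hd _ _ _ _] True
    unfolding nonreal_term_def by blast
next
  case False
  then show ?thesis
    using has_real_decomp_remove_real_term[of ns H 0 lam u 0] si hd has_real_decomp_len0 by simp
qed

lemma skew_relation2_common_factors:
  assumes rel: "\<forall>is js. valid_idx ns is \<and> valid_idx ns js \<longrightarrow>
      c0 * ptensor ns (skew_factors v k) is js + c1 * ptensor ns (skew_factors w k) is js = 0"
    and c0: "c0 \<noteq> 0" and v: "\<forall>l<length ns. \<not> zero_vec (ns!l) (v l)"
    and vk: "\<not> zero_mat (ns!k) (skew (outer (v k)))"
  shows "\<forall>l<length ns. l \<noteq> k \<longrightarrow> vec_multiple (ns!l) (w l) (v l)"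
proof -
  have "\<forall>l<length ns. mat_multiple (ns!l) (skew_factors w k l) (skew_factors v k l)"
    using ptensor_relation2(2)[OF rel c0 skew_factors_nonzero[OF v vk]] .
  then show ?thesis using vec_multiple_if_skew_factors_multiple v by blast
qed

lemma has_real_decomp_len2:
  assumes si: "swap_invariant ns H" and hd: "hdecomp ns H 2 lam u"
  shows "has_real_decomp ns H 2"
proof (cases "nonreal_term ns (lam 0) (u 0) \<and> nonreal_term ns (lam 1) (u 1)")
  case False
  then obtain i where "i \<le> 1" "\<not> nonreal_term ns (lam i) (u i)" by (metis le_refl zero_le)
  then show ?thesis
    using has_real_decomp_remove_real_term[of ns H 1 lam u i] si hd has_real_decomp_len1
    by (simp add: numeral_2_eq_2)
next
  case True
  then have nr: "nonreal_term ns (lam 0) (u 0)" "nonreal_term ns (lam 1) (u 1)" by auto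
  then obtain k where k: "k < length ns" "\<not> zero_mat (ns!k) (skew (outer (u 0 k)))"
    unfolding nonreal_term_def by blast
  have "\<forall>is js. valid_idx ns is \<and> valid_idx ns js \<longrightarrow>
      complex_of_real (lam 0) * ptensor ns (skew_factors (u 0) k) is js
      + complex_of_real (lam 1) * ptensor ns (skew_factors (u 1) k) is js = 0"
    using skew_relation[OF si hd k(1)] by (simp add: sum_lessThan_2)
  then have "\<forall>l<length ns. l \<noteq> k \<longrightarrow> vec_multiple (ns!l) (u 1 l) (u 0 l)"
    using skew_relation2_common_factors[where v="u 0" and w="u 1", OF _ _ _ k(2)] nr(1)
    unfolding nonreal_term_def by simp
  then have "\<forall>i<2. \<forall>l<length ns. l \<noteq> k \<longrightarrow> vec_multiple (ns!l) (u i l) (u 0 l)"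
    using vec_multiple_refl by (auto simp: less_2_cases_iff)
  then show ?thesis
    using has_real_decomp_common_factors[OF si hd k(1)] nr(1) unfolding nonreal_term_def by blast
qed

lemma swap_relation_ptensor_pair:
  assumes si: "swap_invariant ns H" and l: "l < length ns"
    and H: "\<forall>is js. valid_idx ns is \<and> valid_idx ns js \<longrightarrow> H is js = ptensor ns F is js + c * ptensor ns G is js"
  shows "\<forall>is js. valid_idx ns is \<and> valid_idx ns js \<longrightarrow>
    1 * ptensor ns (F(l := skew (F l))) is js + c * ptensor ns (G(l := skew (G l))) is js = 0"
proof (intro allI impI)
  fix "is" js assume ij: "valid_idx ns is \<and> valid_idx ns js"
  define is_sw where "is_sw = is[l:=js!l]"
  define js_sw where "js_sw = js[l:=is!l]"
  have "valid_idx ns is_sw" "valid_idx ns js_sw" unfolding is_sw_def js_sw_def using valid_idx_swap l ij by auto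
  moreover have "H is js = H is_sw js_sw" using si l ij unfolding swap_invariant_def is_sw_def js_sw_def by blast
  ultimately have "(ptensor ns F is js - ptensor ns F is_sw js_sw)
      + c * (ptensor ns G is js - ptensor ns G is_sw js_sw) = 0"
    using H ij by (simp add: algebra_simps)
  then show "1 * ptensor ns (F(l := skew (F l))) is js + c * ptensor ns (G(l := skew (G l))) is js = 0"
    using ptensor_swap_diff[OF l] ij unfolding is_sw_def js_sw_def by simp
qed

text \<open>Unless \<open>M\<close> vanishes, the relation obtained by swapping mode \<open>l\<close> forces \<open>M\<close> to be a real
  multiple of \<open>w\<^sub>k w\<^sub>k\<^sup>*\<close>, so the product tensor has rank one.\<close>

lemma has_real_decomp_ptensor_plus_rank1:
  assumes si: "swap_invariant ns H" and k: "k < length ns"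
    and H: "\<forall>is js. valid_idx ns is \<and> valid_idx ns js \<longrightarrow>
      H is js = ptensor ns ((\<lambda>l. outer (v l))(k := M)) is js + complex_of_real c * hrank1 ns w is js"
    and v: "\<forall>l<length ns. l \<noteq> k \<longrightarrow> \<not> zero_vec (ns!l) (v l)"
    and herm: "\<forall>p q. M q p = cnj (M p q)"
    and l: "l < length ns" "l \<noteq> k" "\<not> zero_mat (ns!l) (skew (outer (v l)))"
    and w: "\<not> zero_vec (ns!k) (w k)" and c: "c \<noteq> 0"
  shows "has_real_decomp ns H 2"
proof (cases "zero_mat (ns!k) M")
  case True
  then have "hdecomp ns H 1 (\<lambda>_. c) (\<lambda>_. w)"
    using H k unfolding hdecomp_def by (simp add: ptensor_zero_factor[of k])
  then show ?thesis using has_real_decomp_len1[OF si] has_real_decomp_mono by fastforce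
next
  case False
  define F where "F = (\<lambda>l. outer (v l))(k := M)"
  have "\<forall>is js. valid_idx ns is \<and> valid_idx ns js \<longrightarrow>
      H is js = ptensor ns F is js + complex_of_real c * ptensor ns (\<lambda>l. outer (w l)) is js"
    using H unfolding F_def hrank1_eq_ptensor .
  then have rel: "\<forall>is js. valid_idx ns is \<and> valid_idx ns js \<longrightarrow>
      1 * ptensor ns (F(l := skew (F l))) is js + complex_of_real c * ptensor ns (skew_factors w l) is js = 0"
    unfolding skew_factors_def by (rule swap_relation_ptensor_pair[OF si l(1)])
  have "\<forall>l'<length ns. \<not> zero_mat (ns!l') ((F(l := skew (F l))) l')"
    using v l False unfolding F_def by (auto simp: zero_mat_outer_iff)
  then have "\<forall>l'<length ns. mat_multiple (ns!l') (skew_factors w l l') ((F(l := skew (F l))) l')"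
    by (rule ptensor_relation2(2)[OF rel one_neq_zero])
  then have "mat_multiple (ns!k) (skew_factors w l k) ((F(l := skew (F l))) k)" using k by blast
  then have "mat_multiple (ns!k) (outer (w k)) M" using l(2) unfolding F_def skew_factors_def by simp
  moreover have "\<forall>p<ns!k. M p p \<in> \<real>" using herm Reals_cnj_iff by metis
  ultimately obtain c' where c': "\<forall>p<ns!k. \<forall>q<ns!k. M p q = complex_of_real c' * outer (w k) p q"
    using real_multiple_of_outer w by blast
  have "ptensor ns F is js = complex_of_real c' * hrank1 ns (v(k := w k)) is js"
    if "valid_idx ns is" "valid_idx ns js" for "is" js
  proof -
    have "ptensor ns F is js
        = (\<Prod>l<length ns. if l = k then complex_of_real c' else 1) * ptensor ns (\<lambda>l. outer ((v(k := w k)) l)) is js"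
      using c' that unfolding F_def by (intro ptensor_scale) auto
    then show ?thesis using k unfolding hrank1_eq_ptensor by (simp add: prod.delta)
  qed
  then have "hdecomp ns H 2 (\<lambda>i. if i = 0 then c' else c) (\<lambda>i. if i = 0 then v(k := w k) else w)"
    using H unfolding hdecomp_def F_def by (simp add: sum_lessThan_2)
  then show ?thesis by (rule has_real_decomp_len2[OF si])
qed

lemma swap_invariant_ptensor_summand:
  assumes si: "swap_invariant ns H" and k: "k < length ns"
    and H: "\<forall>is js. valid_idx ns is \<and> valid_idx ns js \<longrightarrow> H is js = ptensor ns F is js + K is js"
    and K: "\<forall>is js. valid_idx ns is \<and> valid_idx ns js \<longrightarrow> K (is[k:=js!k]) (js[k:=is!k]) = K is js"
    and symmetric: "\<forall>l<length ns. l \<noteq> k \<longrightarrow> zero_mat (ns!l) (skew (F l))"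
  shows "swap_invariant ns (ptensor ns F)"
  unfolding swap_invariant_def
proof (intro allI impI)
  fix l "is" js assume l: "l < length ns" and ij: "valid_idx ns is \<and> valid_idx ns js"
  show "ptensor ns F is js = ptensor ns F (is[l:=js!l]) (js[l:=is!l])"
  proof (cases "l = k")
    case True
    have "H is js = H (is[k:=js!k]) (js[k:=is!k])" using si k ij unfolding swap_invariant_def by blast
    then show ?thesis using H K ij valid_idx_swap[OF k] True by (metis add_right_cancel)
  next
    case False
    then show ?thesis using ptensor_swap_eq[of ns l F] symmetric l ij by simp
  qed
qed

text \<open>When \<open>M\<close> is the only factor of the product tensor that may fail to be symmetric, both
  summands are swap invariant on their own.\<close>

lemma has_real_decomp_ptensor_plus_rank1_symmetric:
  assumes si: "swap_invariant ns H" and k: "k < length ns"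
    and H: "\<forall>is js. valid_idx ns is \<and> valid_idx ns js \<longrightarrow>
      H is js = ptensor ns ((\<lambda>l. outer (v l))(k := M)) is js + complex_of_real c * hrank1 ns w is js"
    and v: "\<forall>l<length ns. l \<noteq> k \<longrightarrow> \<not> zero_vec (ns!l) (v l)"
    and herm: "\<forall>p q. M q p = cnj (M p q)"
    and span: "\<forall>q<ns!k. in_span (ns!k) s a (\<lambda>p. M p q)"
    and symmetric: "\<forall>l<length ns. l \<noteq> k \<longrightarrow> zero_mat (ns!l) (skew (outer (v l)))"
    and wk: "zero_mat (ns!k) (skew (outer (w k)))"
  shows "has_real_decomp ns H (s + 1)"
proof -
  define G where "G = ptensor ns ((\<lambda>l. outer (v l))(k := M))"
  have "\<forall>is js. valid_idx ns is \<and> valid_idx ns js \<longrightarrow>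
      complex_of_real c * hrank1 ns w (is[k:=js!k]) (js[k:=is!k]) = complex_of_real c * hrank1 ns w is js"
    unfolding hrank1_eq_ptensor using wk k ptensor_swap_eq[of ns k "\<lambda>l. outer (w l)"] by simp
  then have G: "swap_invariant ns G"
    unfolding G_def using swap_invariant_ptensor_summand[OF si k H] symmetric by simp
  then have "has_real_decomp ns G s"
    using has_real_decomp_ptensor[OF _ k _ v herm span] unfolding G_def by blast
  moreover have "has_real_decomp ns (\<lambda>is js. H is js - G is js) 1"
  proof (rule has_real_decomp_len1)
    show "swap_invariant ns (\<lambda>is js. H is js - G is js)" by (rule swap_invariant_diff[OF si G])
    show "hdecomp ns (\<lambda>is js. H is js - G is js) 1 (\<lambda>_. c) (\<lambda>_. w)"
      using H unfolding hdecomp_def G_def by simp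
  qed
  ultimately have "has_real_decomp ns (\<lambda>is js. G is js + (H is js - G is js)) (s + 1)"
    by (rule has_real_decomp_add)
  then show ?thesis by (rule has_real_decomp_cong) simp
qed

lemma has_real_decomp_len3_mixed_at_mode:
  assumes si: "swap_invariant ns H" and hd: "hdecomp ns H 3 lam u"
    and nr: "\<forall>i<3. nonreal_term ns (lam i) (u i)"
    and k: "k < length ns" and cx0: "\<not> zero_mat (ns!k) (skew (outer (u 0 k)))"
    and rx2: "zero_mat (ns!k) (skew (outer (u 2 k)))"
  shows "has_real_decomp ns H 3"
proof -
  have nr0: "lam 0 \<noteq> 0" "\<forall>l<length ns. \<not> zero_vec (ns!l) (u 0 l)"
    and nr2: "lam 2 \<noteq> 0" "\<forall>l<length ns. \<not> zero_vec (ns!l) (u 2 l)"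
    using nr unfolding nonreal_term_def by auto
  have "\<forall>is js. valid_idx ns is \<and> valid_idx ns js \<longrightarrow>
      complex_of_real (lam 0) * ptensor ns (skew_factors (u 0) k) is js
      + complex_of_real (lam 1) * ptensor ns (skew_factors (u 1) k) is js = 0"
    using skew_relation[OF si hd k] ptensor_skew_factors_eq_0[where v="u 2", OF rx2 k] by (simp add: sum_lessThan_3)
  then have "\<forall>l<length ns. l \<noteq> k \<longrightarrow> vec_multiple (ns!l) (u 1 l) (u 0 l)"
    using skew_relation2_common_factors[where v="u 0" and w="u 1", OF _ _ nr0(2) cx0] nr0(1) by simp
  then have common: "\<forall>i<2. \<forall>l<length ns. l \<noteq> k \<longrightarrow> vec_multiple (ns!l) (u i l) (u 0 l)"
    using vec_multiple_refl by (auto simp: less_2_cases_iff)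
  have "hdecomp ns (\<lambda>is js. \<Sum>i<2. complex_of_real (lam i) * hrank1 ns (u i) is js) 2 lam u"
    unfolding hdecomp_def by blast
  then obtain M where G: "\<forall>is js. valid_idx ns is \<and> valid_idx ns js \<longrightarrow>
      (\<Sum>i<2. complex_of_real (lam i) * hrank1 ns (u i) is js) = ptensor ns ((\<lambda>l. outer (u 0 l))(k := M)) is js"
    and herm: "\<forall>p q. M q p = cnj (M p q)" and span: "\<forall>q<ns!k. in_span (ns!k) 2 (\<lambda>i. u i k) (\<lambda>p. M p q)"
    using hdecomp_common_factors[OF _ k common] by blast
  have H: "\<forall>is js. valid_idx ns is \<and> valid_idx ns js \<longrightarrow>
      H is js = ptensor ns ((\<lambda>l. outer (u 0 l))(k := M)) is js + complex_of_real (lam 2) * hrank1 ns (u 2) is js"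
    using hd G unfolding hdecomp_def by (simp add: sum_lessThan_3 sum_lessThan_2)
  have v: "\<forall>l<length ns. l \<noteq> k \<longrightarrow> \<not> zero_vec (ns!l) (u 0 l)" using nr0(2) by blast
  show ?thesis
  proof (cases "\<exists>l<length ns. l \<noteq> k \<and> \<not> zero_mat (ns!l) (skew (outer (u 0 l)))")
    case True
    then obtain l where "l < length ns" "l \<noteq> k" "\<not> zero_mat (ns!l) (skew (outer (u 0 l)))" by blast
    then have "has_real_decomp ns H 2"
      using has_real_decomp_ptensor_plus_rank1[OF si k H v herm] nr2 k by blast
    then show ?thesis by (rule has_real_decomp_mono) simp
  next
    case False
    then have "has_real_decomp ns H (2 + 1)"
      using has_real_decomp_ptensor_plus_rank1_symmetric[OF si k H v herm span _ rx2] by blast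
    then show ?thesis by simp
  qed
qed

lemma has_real_decomp_len3_nonreal_at_mode:
  assumes si: "swap_invariant ns H" and hd: "hdecomp ns H 3 lam u"
    and nr: "\<forall>i<3. nonreal_term ns (lam i) (u i)"
    and k: "k < length ns" and cx: "\<forall>i<3. \<not> zero_mat (ns!k) (skew (outer (u i k)))"
  shows "has_real_decomp ns H 3"
proof -
  define F where "F i = skew_factors (u i) k" for i
  have c: "\<forall>i<3. complex_of_real (lam i) \<noteq> 0" and v: "\<forall>i<3. \<forall>l<length ns. \<not> zero_vec (ns!l) (u i l)"
    using nr unfolding nonreal_term_def by auto
  have rel: "\<forall>is js. valid_idx ns is \<and> valid_idx ns js \<longrightarrow>
      (\<Sum>i<3. complex_of_real (lam i) * ptensor ns (F i) is js) = 0"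
    unfolding F_def by (rule skew_relation[OF si hd k])
  have F: "\<forall>i<3. \<forall>l<length ns. \<not> zero_mat (ns!l) (F i l)"
    unfolding F_def using skew_factors_nonzero v cx by blast
  obtain k0 where k0: "\<forall>i<3. \<forall>l<length ns. l \<noteq> k0 \<longrightarrow> mat_multiple (ns!l) (F i l) (F 0 l)"
    by (rule ptensor_relation3[OF rel c F])
  have "\<forall>i<3. \<forall>l<length ns. l \<noteq> k \<longrightarrow> vec_multiple (ns!l) (u i l) (u 0 l)"
  proof (intro allI impI)
    fix i l :: nat assume il: "i < 3" "l < length ns" "l \<noteq> k"
    show "vec_multiple (ns!l) (u i l) (u 0 l)"
    proof (cases "l = k0")
      case True
      then have "\<forall>i<3. \<forall>l'<length ns. l' \<noteq> l \<longrightarrow> mat_multiple (ns!l') (F i l') (F 0 l')"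
        using k0 by simp
      then obtain d where d: "\<forall>i<3. d i \<noteq> 0" "\<forall>p<ns!l. \<forall>q<ns!l. (\<Sum>i<3. d i * F i l p q) = 0"
        by (rule ptensor_relation3_at_mode[OF rel c F il(2)])
      then have rel_l: "\<forall>p<ns!l. \<forall>q<ns!l. (\<Sum>i<3. d i * outer (u i l) p q) = 0"
        using il(3) unfolding F_def skew_factors_def by simp
      have "\<forall>i<3. \<not> zero_vec (ns!l) (u i l)" using v il(2) by auto
      with il(1) show ?thesis using outer_relation3[OF rel_l d(1)] by auto
    next
      case False
      then have "mat_multiple (ns!l) (skew_factors (u i) k l) (skew_factors (u 0) k l)"
        using k0 il unfolding F_def by blast
      moreover have "\<not> zero_vec (ns!l) (u 0 l)" using v il(2) by auto
      ultimately show ?thesis using vec_multiple_if_skew_factors_multiple il(3) by blast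
    qed
  qed
  moreover have "\<forall>l<length ns. l \<noteq> k \<longrightarrow> \<not> zero_vec (ns!l) (u 0 l)" using v by auto
  ultimately show ?thesis by (rule has_real_decomp_common_factors[OF si hd k])
qed

lemma has_real_decomp_len3:
  assumes si: "swap_invariant ns H" and hd: "hdecomp ns H 3 lam u"
  shows "has_real_decomp ns H 3"
proof (cases "\<forall>i<3. nonreal_term ns (lam i) (u i)")
  case False
  then obtain i where "i \<le> 2" "\<not> nonreal_term ns (lam i) (u i)" by force
  then show ?thesis
    using has_real_decomp_remove_real_term[of ns H 2 lam u i] si hd has_real_decomp_len2
    by (simp add: numeral_3_eq_3)
next
  case nr: True
  then have "nonreal_term ns (lam 0) (u 0)" by simp
  then obtain k where k: "k < length ns" "\<not> zero_mat (ns!k) (skew (outer (u 0 k)))"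
    unfolding nonreal_term_def by blast
  consider "zero_mat (ns!k) (skew (outer (u 2 k)))" | "zero_mat (ns!k) (skew (outer (u 1 k)))"
    | "\<forall>i<3. \<not> zero_mat (ns!k) (skew (outer (u i k)))"
    using k(2) less_3_cases by blast
  then show ?thesis
  proof cases
    case 1
    then show ?thesis using has_real_decomp_len3_mixed_at_mode[OF si hd nr k] by blast
  next
    case 2
    define \<pi> :: "nat \<Rightarrow> nat" where "\<pi> i = (if i = 1 then 2 else if i = 2 then 1 else i)" for i
    have "bij_betw \<pi> {..<3} {..<3}"
      by (rule bij_betw_byWitness[where f'=\<pi>]) (auto simp: \<pi>_def)
    then have "hdecomp ns H 3 (lam \<circ> \<pi>) (u \<circ> \<pi>)" by (rule hdecomp_permute[OF hd])
    moreover have "\<forall>i<3. nonreal_term ns ((lam \<circ> \<pi>) i) ((u \<circ> \<pi>) i)"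
      using nr by (auto simp: \<pi>_def)
    ultimately show ?thesis
      using has_real_decomp_len3_mixed_at_mode[OF si _ _ k(1)] k(2) 2 by (simp add: \<pi>_def)
  next
    case 3
    then show ?thesis using has_real_decomp_len3_nonreal_at_mode[OF si hd nr k(1)] by blast
  qed
qed

lemma has_real_decomp_if_swap_invariant:
  assumes "swap_invariant ns H" "hdecomp ns H r lam u" "r \<le> 3"
  shows "has_real_decomp ns H r"
proof -
  have "r = 0 \<or> r = 1 \<or> r = 2 \<or> r = 3" using assms(3) by auto
  then show ?thesis
    using has_real_decomp_len0 has_real_decomp_len1 has_real_decomp_len2 has_real_decomp_len3 assms(1,2)
    by auto
qed

theorem proposition3p7:
  fixes ns :: "nat list" and H :: "nat list \<Rightarrow> nat list \<Rightarrow> complex"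
  assumes "ns \<noteq> []" and "\<forall>n\<in>set ns. n > 0"
    and "H \<in> RD ns"
  shows "(hrank ns H \<le> 3 \<longrightarrow> hrank ns H = hrank_real ns H)
       \<and> (hrank_real ns H \<le> 4 \<longrightarrow> hrank ns H = hrank_real ns H)"
proof -
  obtain r lam u where real: "real_vectors u" "hdecomp ns H r lam u"
    using assms(3) unfolding RD_def by blast
  then have si: "swap_invariant ns H" by (rule swap_invariant_if_real_vectors)
  obtain lam' u' where hd: "hdecomp ns H (hrank ns H) lam' u'"
    using LeastI_ex[of "\<lambda>r. \<exists>lam u. hdecomp ns H r lam u"] real(2) unfolding hrank_def by blast
  have le: "hrank ns H \<le> hrank_real ns H"
    using LeastI_ex[of "\<lambda>r. \<exists>lam u. real_vectors u \<and> hdecomp ns H r lam u"] real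
    unfolding hrank_def hrank_real_def by (blast intro: Least_le)
  have "hrank_real ns H \<le> hrank ns H" if "hrank ns H \<le> 3"
    using has_real_decomp_if_swap_invariant[OF si hd that]
    unfolding hrank_real_def has_real_decomp_def by (blast intro: Least_le)
  with le have "hrank ns H \<le> 3 \<Longrightarrow> hrank ns H = hrank_real ns H" by simp
  with le show ?thesis by linarith
qed

end
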